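(* Let $m\ge5$ and $l\ge2$ be integers and let $G=C_{lm}(S)$ with $S=\{s\in\{1,\dots,\lfloor lm/2\rfloor\}: s=l\text{ or } l\nmid s\}$ (equivalently, the join of $l$ copies of the cycle $C_m$). Then for $i\ge1$, $$\beta_{i,i+1}(G)=lm\binom{(l-1)m+1}{i-1}+(l-1)\binom{lm}{i+1}-l\binom{(l-1)m}{i+1}.$$
   Context: The circulant graph $C_n(S)$ ($S\subseteq\{1,\dots,\lfloor n/2\rfloor\}$) has vertex set $\{0,\dots,n-1\}$ with $\{a,b\}$ an edge iff $\min(|a-b|,n-|a-b|)\in S$. For a graph $G$ on vertex set $V$, $R=\mathbb{K}[x_v:v\in V]$ over a fixed field $\mathbb{K}$, $I(G)=\langle x_ux_v:\{u,v\}\in E(G)\rangle$, and $\beta_{i,d}(G)=\beta_{i,d}(R/I(G))$ is the graded Betti number. Binomial coefficients $\binom{a}{b}$ are $0$ if $b<0$ or $b>a$. *)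

theory Defs
  imports Complex_Main "HOL-Library.Function_Algebras"
begin

definition circ_dist :: "nat \<Rightarrow> nat \<Rightarrow> nat \<Rightarrow> nat" where
  "circ_dist n a b = (let d = (if a \<le> b then b - a else a - b) in min d (n - d))"

definition circulant_adj :: "nat \<Rightarrow> nat set \<Rightarrow> nat \<Rightarrow> nat \<Rightarrow> bool" where
  "circulant_adj n S a b \<longleftrightarrow> a < n \<and> b < n \<and> a \<noteq> b \<and> circ_dist n a b \<in> S"

text \<open>R = K[x_0..x_(n-1)].
  Monomials are exponent vectors u :: nat => nat vanishing outside {0..<n}.
  R/I(G) has K-basis the standard monomials: those not divisible by any x_a x_b with E a b.
  beta_{i,d}(R/I) = dim_K Tor_i^R(R/I,K)_d = dim_K H_i(K(x) tensor R/I)_d, where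
  the Koszul complex K_i has basis u (x) e_F with u standard, F a subset of {0..<n} of card i,
  of degree deg u + |F|.\<close>

definition mon_deg :: "nat \<Rightarrow> (nat \<Rightarrow> nat) \<Rightarrow> nat" where
  "mon_deg n u = (\<Sum>k<n. u k)"

definition standard_mon :: "nat \<Rightarrow> (nat \<Rightarrow> nat \<Rightarrow> bool) \<Rightarrow> (nat \<Rightarrow> nat) \<Rightarrow> bool" where
  "standard_mon n E u \<longleftrightarrow> (\<forall>k. n \<le> k \<longrightarrow> u k = 0) \<and>
     \<not> (\<exists>a b. E a b \<and> 1 \<le> u a \<and> 1 \<le> u b)"

definition kbasis :: "nat \<Rightarrow> (nat \<Rightarrow> nat \<Rightarrow> bool) \<Rightarrow> nat \<Rightarrow> nat \<Rightarrow> ((nat \<Rightarrow> nat) \<times> nat set) set" where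
  "kbasis n E i d = {(u, F). standard_mon n E u \<and> F \<subseteq> {0..<n} \<and> card F = i \<and>
                             mon_deg n u + i = d}"

definition kchains :: "nat \<Rightarrow> (nat \<Rightarrow> nat \<Rightarrow> bool) \<Rightarrow> nat \<Rightarrow> nat \<Rightarrow>
    (((nat \<Rightarrow> nat) \<times> nat set) \<Rightarrow> 'k::field) set" where
  "kchains n E i d = {f. \<forall>x. x \<notin> kbasis n E i d \<longrightarrow> f x = 0}"

text \<open>Koszul differential (on chains of homological degree i \<ge> 1):
  d(u (x) e_F) = sum_{j in F} (-1)^{#{k in F. k < j}} (x_j u) (x) e_{F - {j}},
  where x_j u is 0 in R/I if it is not standard.  Coefficient of (v,G) in d(f):\<close>
definition kdiff :: "nat \<Rightarrow> (nat \<Rightarrow> nat \<Rightarrow> bool) \<Rightarrow> nat \<Rightarrow> nat \<Rightarrow>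
    (((nat \<Rightarrow> nat) \<times> nat set) \<Rightarrow> 'k::field) \<Rightarrow> ((nat \<Rightarrow> nat) \<times> nat set) \<Rightarrow> 'k" where
  "kdiff n E i d f = (\<lambda>(v, G).
     if (v, G) \<in> kbasis n E (i - 1) d then
       (\<Sum>j\<in>{j. j < n \<and> j \<notin> G \<and> 1 \<le> v j}.
          (-1) ^ card {k\<in>G. k < j} * f (v(j := v j - 1), insert j G))
     else 0)"

definition fun_scale :: "'k::field \<Rightarrow> ('a \<Rightarrow> 'k) \<Rightarrow> ('a \<Rightarrow> 'k)" where
  "fun_scale c f = (\<lambda>x. c * f x)"

definition kdim :: "('a \<Rightarrow> 'k::field) set \<Rightarrow> nat" where
  "kdim W = vector_space.dim (fun_scale :: 'k \<Rightarrow> ('a \<Rightarrow> 'k) \<Rightarrow> ('a \<Rightarrow> 'k)) W"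

definition betti :: "'k::field itself \<Rightarrow> nat \<Rightarrow> (nat \<Rightarrow> nat \<Rightarrow> bool) \<Rightarrow> nat \<Rightarrow> nat \<Rightarrow> nat" where
  "betti _ n E i d =
     kdim ((if i = 0 then kchains n E 0 d
            else {f \<in> kchains n E i d. kdiff n E i d f = (\<lambda>_. 0)}) :: (_ \<Rightarrow> 'k) set)
     - kdim ((kdiff n E (i + 1) d ` kchains n E (i + 1) d) :: (_ \<Rightarrow> 'k) set)"

end

theory Submission
  imports Defs "HOL-Number_Theory.Cong"
begin

text \<open>
  In internal degree \<open>i + 1\<close> the Koszul complex of \<open>R/I(G)\<close> consists of the chains
  \<open>1 \<otimes> e\<^sub>F\<close> with \<open>|F| = i + 1\<close> in homological degree \<open>i + 1\<close> and \<open>x\<^sub>v \<otimes> e\<^sub>F\<close> with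
  \<open>|F| = i\<close> in degree \<open>i\<close>. The differential is injective on the former, and a cycle among the
  latter is determined by one constant per connected component of the complement of \<open>G\<close>
  restricted to an \<open>(i + 1)\<close>-set \<open>W\<close>: its signed coefficients at the chains
  \<open>x\<^sub>v \<otimes> e\<^bsub>W - {v}\<^esub>\<close> agree along every complement edge \<open>{a, b}\<close>, because \<open>x\<^sub>a x\<^sub>b\<close> is a
  standard monomial and the boundary at \<open>x\<^sub>a x\<^sub>b \<otimes> e\<^bsub>W - {a, b}\<^esub>\<close> must vanish. Hence
  \<open>\<beta>\<^sub>i\<^sub>,\<^sub>i\<^sub>+\<^sub>1\<close> is the sum of \<open>c(W) - 1\<close> over all \<open>(i + 1)\<close>-sets \<open>W\<close>, where \<open>c(W)\<close> counts
  these components.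

  For the circulant graph, two vertices are non-adjacent iff they are congruent mod \<open>l\<close> and
  their quotients are non-adjacent in \<open>C\<^sub>m\<close>: the complement is \<open>l\<close> disjoint copies of the
  complement of \<open>C\<^sub>m\<close>, one on each residue class. For \<open>m \<ge> 5\<close> a nonempty set of vertices of the
  complement of \<open>C\<^sub>m\<close> induces a connected graph unless it is an edge \<open>{q, q + 1}\<close> or a path
  \<open>{q - 1, q, q + 1}\<close> of \<open>C\<^sub>m\<close>, which have two components. Counting the sets \<open>W\<close> by their
  traces on the residue classes, and using \<open>C(N, i - 1) + C(N, i - 2) = C(N + 1, i - 1)\<close>, gives
  the formula.
\<close>

section \<open>Finitely supported functions as a vector space\<close>

interpretation fun_space: vector_space "fun_scale :: 'k::field \<Rightarrow> ('a \<Rightarrow> 'k) \<Rightarrow> ('a \<Rightarrow> 'k)"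
  by unfold_locales (auto simp: fun_scale_def algebra_simps fun_eq_iff)

lemma fun_scale_apply [simp]: "fun_scale c f x = c * f x"
  by (simp add: fun_scale_def)

lemma sum_fun_apply: "(sum g A) x = (\<Sum>a\<in>A. g a x)"
  by (induct A rule: infinite_finite_induct) auto

lemma kdim_eq_card_basis:
  fixes B V :: "('a \<Rightarrow> 'k::field) set"
  assumes "B \<subseteq> V" "V \<subseteq> fun_space.span B" "fun_space.independent B"
  shows "kdim V = card B"
  using fun_space.basis_card_eq_dim[OF assms] unfolding kdim_def by simp

lemma diagonal_family_independent:
  fixes b :: "'i \<Rightarrow> 'a \<Rightarrow> 'k::field"
  assumes fin: "finite I"
    and pivot: "\<And>p. p \<in> I \<Longrightarrow> b p (w p) \<noteq> 0"
    and off_pivot: "\<And>p q. p \<in> I \<Longrightarrow> q \<in> I \<Longrightarrow> q \<noteq> p \<Longrightarrow> b q (w p) = 0"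
  shows "fun_space.independent (b ` I)" and "card (b ` I) = card I"
proof -
  have "inj_on b I"
  proof (rule inj_onI)
    fix p q assume "p \<in> I" "q \<in> I" "b p = b q"
    then show "p = q" using pivot[of p] off_pivot[of p q] by metis
  qed
  then show "card (b ` I) = card I" by (rule card_image)
  show "fun_space.independent (b ` I)"
    unfolding fun_space.independent_explicit_module
  proof (intro allI impI)
    fix t u v
    assume t: "finite t" "t \<subseteq> b ` I" "(\<Sum>v\<in>t. fun_scale (u v) v) = (0 :: 'a \<Rightarrow> 'k)" "v \<in> t"
    then obtain p where p: "p \<in> I" "v = b p" by auto
    have rest: "(\<Sum>v'\<in>t - {v}. u v' * v' (w p)) = 0"
    proof (rule sum.neutral, rule ballI)
      fix v' assume "v' \<in> t - {v}"
      then obtain q where "q \<in> I" "v' = b q" "q \<noteq> p" using t(2) p by auto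
      then show "u v' * v' (w p) = 0" using off_pivot[OF p(1)] by simp
    qed
    have "0 = (\<Sum>v'\<in>t. u v' * v' (w p))"
      using fun_cong[OF t(3), of "w p"] by (simp add: sum_fun_apply)
    also have "\<dots> = u v * v (w p)"
      using sum.remove[OF t(1) t(4), of "\<lambda>v'. u v' * v' (w p)"] rest by simp
    finally show "u v = 0" using pivot[OF p(1)] p(2) by simp
  qed
qed

definition delta :: "'a \<Rightarrow> 'a \<Rightarrow> 'k::field" where
  "delta p = (\<lambda>q. if q = p then 1 else 0)"

lemma finite_support_expansion:
  fixes f :: "'a \<Rightarrow> 'k::field"
  assumes "finite B" "\<And>x. x \<notin> B \<Longrightarrow> f x = 0"
  shows "f = (\<Sum>p\<in>B. fun_scale (f p) (delta p))"
proof
  fix x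
  show "f x = (\<Sum>p\<in>B. fun_scale (f p) (delta p)) x"
    using assms
    by (cases "x \<in> B") (auto simp: sum_fun_apply delta_def if_distrib cong: if_cong)
qed

section \<open>Koszul chains in the linear strand\<close>

definition var_mon :: "nat \<Rightarrow> nat \<Rightarrow> nat" where
  "var_mon v = (\<lambda>k. if k = v then 1 else 0)"

definition square_mon :: "nat \<Rightarrow> nat \<Rightarrow> nat" where
  "square_mon v = (\<lambda>k. if k = v then 2 else 0)"

definition pair_mon :: "nat \<Rightarrow> nat \<Rightarrow> nat \<Rightarrow> nat" where
  "pair_mon a b = (\<lambda>k. if k = a \<or> k = b then 1 else 0)"

definition koszul_sign :: "nat set \<Rightarrow> nat \<Rightarrow> 'k::field" where
  "koszul_sign G x = (-1) ^ card {k\<in>G. k < x}"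

lemma koszul_sign_nonzero [simp]: "koszul_sign G x \<noteq> (0::'k::field)"
  by (simp add: koszul_sign_def)

lemma koszul_sign_square [simp]: "koszul_sign G x * koszul_sign G x = (1::'k::field)"
  by (simp add: koszul_sign_def power_mult_distrib[symmetric])

lemma koszul_sign_insert:
  assumes "b \<notin> G" "finite G"
  shows "koszul_sign (insert b G) a = (if b < a then - koszul_sign G a else (koszul_sign G a :: 'k::field))"
proof -
  have "{k\<in>insert b G. k < a} = (if b < a then insert b {k\<in>G. k < a} else {k\<in>G. k < a})"
    by auto
  then show ?thesis using assms by (auto simp: koszul_sign_def)
qed

lemma var_mon_eq_iff [simp]: "var_mon v = var_mon w \<longleftrightarrow> v = w"
  unfolding var_mon_def by (metis zero_neq_one)

lemma mon_deg_var_mon: "v < n \<Longrightarrow> mon_deg n (var_mon v) = 1"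
  by (simp add: mon_deg_def var_mon_def)

lemma mon_deg_square_mon: "v < n \<Longrightarrow> mon_deg n (square_mon v) = 2"
  by (simp add: mon_deg_def square_mon_def)

lemma mon_deg_pair_mon:
  assumes "a < n" "b < n" "a \<noteq> b"
  shows "mon_deg n (pair_mon a b) = 2"
proof -
  have "pair_mon a b = (\<lambda>k. (if k = a then 1 else 0) + (if k = b then 1 else 0))"
    using assms by (auto simp: pair_mon_def fun_eq_iff)
  then show ?thesis using assms by (simp add: mon_deg_def sum.distrib)
qed

lemma mon_deg_eq_1:
  assumes "\<forall>k. n \<le> k \<longrightarrow> u k = 0" "mon_deg n u = 1"
  obtains v where "v < n" "u = var_mon v"
proof -
  have "sum u {..<n} = Suc 0" using assms by (simp add: mon_deg_def)
  then obtain a where a: "a < n" "u a = Suc 0" "\<forall>b<n. a \<noteq> b \<longrightarrow> u b = 0"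
    using sum_eq_Suc0_iff[of "{..<n}" u] by auto
  have "u = var_mon a"
  proof
    fix k show "u k = var_mon a k"
      using a assms(1) by (cases "k < n") (auto simp: var_mon_def)
  qed
  with a(1) show thesis by (rule that)
qed

lemma mon_deg_eq_0:
  assumes "\<forall>k. n \<le> k \<longrightarrow> u k = 0" "mon_deg n u = 0"
  shows "u = (\<lambda>_. 0)"
proof
  fix k show "u k = 0"
    using assms by (cases "k < n") (auto simp: mon_deg_def)
qed

locale simple_graph =
  fixes n :: nat and E :: "nat \<Rightarrow> nat \<Rightarrow> bool"
  assumes sym: "E a b \<Longrightarrow> E b a" and irrefl: "\<not> E a a"
begin

lemma standard_var_mon: "v < n \<Longrightarrow> standard_mon n E (var_mon v)"
  by (auto simp: standard_mon_def var_mon_def irrefl split: if_splits)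

lemma standard_square_mon: "v < n \<Longrightarrow> standard_mon n E (square_mon v)"
  by (auto simp: standard_mon_def square_mon_def irrefl split: if_splits)

lemma standard_pair_mon: "\<lbrakk>a < n; b < n; \<not> E a b\<rbrakk> \<Longrightarrow> standard_mon n E (pair_mon a b)"
  by (auto simp: standard_mon_def pair_mon_def irrefl split: if_splits dest: sym)

lemma kbasis_var_mon_iff:
  "(var_mon v, F) \<in> kbasis n E i (Suc i) \<longleftrightarrow> v < n \<and> F \<subseteq> {0..<n} \<and> card F = i"
proof
  assume h: "(var_mon v, F) \<in> kbasis n E i (Suc i)"
  then have "v < n"
    unfolding kbasis_def standard_mon_def var_mon_def by (auto dest!: spec[of _ v])
  with h show "v < n \<and> F \<subseteq> {0..<n} \<and> card F = i" by (auto simp: kbasis_def)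
qed (auto simp: kbasis_def standard_var_mon mon_deg_var_mon)

lemma kbasis_linearE:
  assumes "(u, F) \<in> kbasis n E i (Suc i)"
  obtains v where "v < n" "u = var_mon v"
proof -
  have "\<forall>k. n \<le> k \<longrightarrow> u k = 0" "mon_deg n u = 1"
    using assms by (auto simp: kbasis_def standard_mon_def)
  then show thesis using that by (rule mon_deg_eq_1)
qed

lemma kbasis_const_iff:
  "(u, F) \<in> kbasis n E j j \<longleftrightarrow> u = (\<lambda>_. 0) \<and> F \<subseteq> {0..<n} \<and> card F = j"
proof
  assume h: "(u, F) \<in> kbasis n E j j"
  then have "u = (\<lambda>_. 0)" by (intro mon_deg_eq_0) (auto simp: kbasis_def standard_mon_def)
  with h show "u = (\<lambda>_. 0) \<and> F \<subseteq> {0..<n} \<and> card F = j" by (auto simp: kbasis_def)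
qed (auto simp: kbasis_def standard_mon_def mon_deg_def)

lemma kbasis_const_eq: "kbasis n E j j = Pair (\<lambda>_. 0) ` {F. F \<subseteq> {0..<n} \<and> card F = j}"
  using kbasis_const_iff by auto

lemma finite_kbasis_const: "finite (kbasis n E j j)"
  by (simp add: kbasis_const_eq)

lemma card_kbasis_const: "card (kbasis n E j j) = n choose j"
proof -
  have "card (kbasis n E j j) = card {F. F \<subseteq> {0..<n} \<and> card F = j}"
    unfolding kbasis_const_eq by (rule card_image) (simp add: inj_on_def)
  then show ?thesis using n_subsets[of "{0..<n}" j] by simp
qed

lemma kbasis_square_mon:
  "\<lbrakk>v < n; G \<subseteq> {0..<n}; card G = i - 1; 1 \<le> i\<rbrakk> \<Longrightarrow> (square_mon v, G) \<in> kbasis n E (i - 1) (Suc i)"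
  by (auto simp: kbasis_def standard_square_mon mon_deg_square_mon)

lemma kbasis_pair_mon:
  "\<lbrakk>a < n; b < n; a \<noteq> b; \<not> E a b; G \<subseteq> {0..<n}; card G = i - 1; 1 \<le> i\<rbrakk>
   \<Longrightarrow> (pair_mon a b, G) \<in> kbasis n E (i - 1) (Suc i)"
  by (auto simp: kbasis_def standard_pair_mon mon_deg_pair_mon)

lemma kdiff_var_mon:
  "kdiff n E (Suc i) (Suc i) f (var_mon w, G) =
    (if (var_mon w, G) \<in> kbasis n E i (Suc i) \<and> w \<notin> G
     then koszul_sign G w * f (\<lambda>_. 0, insert w G) else 0)"
proof (cases "(var_mon w, G) \<in> kbasis n E i (Suc i)")
  case True
  then have "w < n" by (simp add: kbasis_var_mon_iff)
  then have "{j. j < n \<and> j \<notin> G \<and> Suc 0 \<le> var_mon w j} = (if w \<in> G then {} else {w})"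
    by (auto simp: var_mon_def split: if_splits)
  moreover have "(var_mon w)(w := var_mon w w - Suc 0) = (\<lambda>_. 0)"
    by (auto simp: var_mon_def fun_eq_iff)
  ultimately show ?thesis using True unfolding kdiff_def by (simp add: koszul_sign_def)
qed (simp add: kdiff_def)

lemma kdiff_square_mon:
  assumes "(square_mon v, G) \<in> kbasis n E (i - 1) d" "v < n" "v \<notin> G"
  shows "kdiff n E i d f (square_mon v, G) = koszul_sign G v * f (var_mon v, insert v G)"
proof -
  have "{j. j < n \<and> j \<notin> G \<and> Suc 0 \<le> square_mon v j} = {v}"
    using assms by (auto simp: square_mon_def split: if_splits)
  moreover have "(square_mon v)(v := square_mon v v - Suc 0) = var_mon v"
    by (auto simp: var_mon_def square_mon_def fun_eq_iff)
  ultimately show ?thesis using assms(1) unfolding kdiff_def by (simp add: koszul_sign_def)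
qed

lemma kdiff_pair_mon:
  assumes "(pair_mon a b, G) \<in> kbasis n E (i - 1) d" "a < n" "b < n" "a \<noteq> b" "a \<notin> G" "b \<notin> G"
  shows "kdiff n E i d f (pair_mon a b, G) =
    koszul_sign G a * f (var_mon b, insert a G) + koszul_sign G b * f (var_mon a, insert b G)"
proof -
  have "{j. j < n \<and> j \<notin> G \<and> Suc 0 \<le> pair_mon a b j} = {a, b}"
    using assms by (auto simp: pair_mon_def split: if_splits)
  moreover have "(pair_mon a b)(a := pair_mon a b a - Suc 0) = var_mon b"
    "(pair_mon a b)(b := pair_mon a b b - Suc 0) = var_mon a"
    using assms(4) by (auto simp: var_mon_def pair_mon_def fun_eq_iff)
  ultimately show ?thesis using assms(1,4) unfolding kdiff_def by (simp add: koszul_sign_def)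
qed

lemma kdiff_sum:
  assumes "finite B"
  shows "kdiff n E i d (\<Sum>p\<in>B. fun_scale (c p) (g p)) = (\<Sum>p\<in>B. fun_scale (c p) (kdiff n E i d (g p)))"
proof
  fix x :: "(nat \<Rightarrow> nat) \<times> nat set"
  obtain v G where x: "x = (v, G)" by fastforce
  show "kdiff n E i d (\<Sum>p\<in>B. fun_scale (c p) (g p)) x = (\<Sum>p\<in>B. fun_scale (c p) (kdiff n E i d (g p))) x"
    unfolding x kdiff_def
    by (simp add: sum_fun_apply sum_distrib_left sum.swap[of _ B] mult.left_commute)
qed

section \<open>Cycles of the linear strand and components of the complement\<close>

definition co_edge :: "nat set \<Rightarrow> nat \<Rightarrow> nat \<Rightarrow> bool" where
  "co_edge W a b \<longleftrightarrow> a \<in> W \<and> b \<in> W \<and> a \<noteq> b \<and> \<not> E a b"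

abbreviation co_linked :: "nat set \<Rightarrow> nat \<Rightarrow> nat \<Rightarrow> bool" where
  "co_linked W \<equiv> (co_edge W)\<^sup>*\<^sup>*"

definition co_rep :: "nat set \<Rightarrow> nat \<Rightarrow> nat" where
  "co_rep W a = Min {w\<in>W. co_linked W a w}"

lemma co_edge_sym: "co_edge W a b \<Longrightarrow> co_edge W b a"
  by (auto simp: co_edge_def dest: sym)

lemma co_linked_sym: "co_linked W a b \<Longrightarrow> co_linked W b a"
  by (induct rule: rtranclp_induct) (auto dest: co_edge_sym intro: converse_rtranclp_into_rtranclp)

lemma co_rep_eq: "co_linked W a b \<Longrightarrow> co_rep W a = co_rep W b"
proof -
  assume "co_linked W a b"
  then have "{w\<in>W. co_linked W a w} = {w\<in>W. co_linked W b w}"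
    by (auto dest: co_linked_sym intro: rtranclp_trans)
  then show ?thesis by (simp add: co_rep_def)
qed

lemma co_rep_in:
  assumes "finite W" "a \<in> W"
  shows "co_rep W a \<in> W" and "co_linked W a (co_rep W a)"
proof -
  have "co_rep W a \<in> {w\<in>W. co_linked W a w}"
    unfolding co_rep_def using assms by (intro Min_in) auto
  then show "co_rep W a \<in> W" "co_linked W a (co_rep W a)" by simp_all
qed

lemma co_rep_idem: "\<lbrakk>finite W; a \<in> W\<rbrakk> \<Longrightarrow> co_rep W (co_rep W a) = co_rep W a"
  using co_rep_in co_rep_eq by metis

lemma co_linked_isolated:
  assumes "\<And>b. \<not> co_edge W a b" and "co_linked W a b"
  shows "b = a"
  using assms(2) by (induct rule: rtranclp_induct) (auto simp: assms(1))

lemma co_rep_isolated: "\<lbrakk>finite W; a \<in> W; \<And>b. \<not> co_edge W a b\<rbrakk> \<Longrightarrow> co_rep W a = a"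
  using co_rep_in co_linked_isolated by metis

lemma co_rep_fixed_points:
  assumes "finite W"
  shows "{x\<in>W. co_rep W x = x} = co_rep W ` W"
proof (intro equalityI subsetI)
  fix x assume "x \<in> {x\<in>W. co_rep W x = x}"
  then show "x \<in> co_rep W ` W" by (metis (mono_tags, lifting) imageI mem_Collect_eq)
next
  fix y assume "y \<in> co_rep W ` W"
  then obtain a where "a \<in> W" "y = co_rep W a" by blast
  then show "y \<in> {x\<in>W. co_rep W x = x}" using co_rep_in(1) co_rep_idem assms by simp
qed

definition cycle_vec :: "nat set \<Rightarrow> nat \<Rightarrow> (nat \<Rightarrow> nat) \<times> nat set \<Rightarrow> 'k::field" where
  "cycle_vec W x =
     (\<Sum>v\<in>{v\<in>W. co_rep W v = x}. fun_scale (koszul_sign W v) (delta (var_mon v, W - {v})))"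

lemma cycle_vec_var_mon:
  assumes "finite W"
  shows "cycle_vec W x (var_mon v, F) =
    (if v \<in> W \<and> F = W - {v} \<and> co_rep W v = x then koszul_sign W v else 0)"
proof -
  have "cycle_vec W x (var_mon v, F) =
      (\<Sum>v'\<in>{v\<in>W. co_rep W v = x}. if v' = v then (if F = W - {v} then koszul_sign W v else 0) else 0)"
    unfolding cycle_vec_def sum_fun_apply
    by (rule sum.cong) (auto simp: delta_def)
  also have "\<dots> = (if v \<in> W \<and> F = W - {v} \<and> co_rep W v = x then koszul_sign W v else 0)"
    using assms by simp
  finally show ?thesis .
qed

lemma cycle_vec_nonzeroD:
  assumes "(cycle_vec W x (u, F) :: 'k::field) \<noteq> 0"
  shows "\<exists>v\<in>W. u = var_mon v \<and> F = W - {v} \<and> co_rep W v = x"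
proof (rule ccontr)
  assume "\<not> ?thesis"
  then have "(cycle_vec W x (u, F) :: 'k) = 0"
    unfolding cycle_vec_def sum_fun_apply by (intro sum.neutral) (auto simp: delta_def)
  with assms show False by simp
qed

lemma kdiff_nonzeroD:
  assumes "(kdiff n E i d f (u, G) :: 'k::field) \<noteq> 0"
  shows "(u, G) \<in> kbasis n E (i - 1) d"
    and "\<exists>j<n. j \<notin> G \<and> 1 \<le> u j \<and> f (u(j := u j - 1), insert j G) \<noteq> 0"
proof -
  show "(u, G) \<in> kbasis n E (i - 1) d"
    using assms by (auto simp: kdiff_def split: if_splits)
  show "\<exists>j<n. j \<notin> G \<and> 1 \<le> u j \<and> f (u(j := u j - 1), insert j G) \<noteq> 0"
  proof (rule ccontr)
    assume "\<not> ?thesis"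
    then have "kdiff n E i d f (u, G) = 0"
      unfolding kdiff_def by (auto intro!: sum.neutral)
    with assms show False by simp
  qed
qed

definition rep_pairs :: "nat \<Rightarrow> (nat set \<times> nat) set" where
  "rep_pairs i = {(W, x). W \<subseteq> {0..<n} \<and> card W = Suc i \<and> x \<in> W \<and> co_rep W x = x}"

lemma rep_pairsD:
  assumes "(W, x) \<in> rep_pairs i"
  shows "W \<subseteq> {0..<n}" "card W = Suc i" "finite W" "x \<in> W" "co_rep W x = x"
  using assms by (auto simp: rep_pairs_def intro: card_ge_0_finite)

lemma finite_rep_pairs: "finite (rep_pairs i)"
  by (rule finite_subset[of _ "Pow {0..<n} \<times> {0..<n}"]) (auto simp: rep_pairs_def)

definition linear_cycles :: "nat \<Rightarrow> ((nat \<Rightarrow> nat) \<times> nat set \<Rightarrow> 'k::field) set" where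
  "linear_cycles i = {f \<in> kchains n E i (Suc i). kdiff n E i (Suc i) f = (\<lambda>_. 0)}"

lemma cycle_vec_chain:
  assumes "(W, x) \<in> rep_pairs i"
  shows "(cycle_vec W x :: _ \<Rightarrow> 'k::field) \<in> kchains n E i (Suc i)"
  unfolding kchains_def
proof (intro CollectI allI impI)
  fix p assume p: "p \<notin> kbasis n E i (Suc i)"
  obtain u F where pe: "p = (u, F)" by fastforce
  show "(cycle_vec W x p :: 'k) = 0"
  proof (rule ccontr)
    assume "(cycle_vec W x p :: 'k) \<noteq> 0"
    then obtain v where v: "v \<in> W" "u = var_mon v" "F = W - {v}"
      using cycle_vec_nonzeroD pe by blast
    note W = rep_pairsD[OF assms]
    have "v < n" using subsetD[OF W(1) v(1)] by simp
    moreover have "F \<subseteq> {0..<n}" using W(1) v(3) by blast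
    moreover have "card F = i" using W(2,3) v(1,3) by simp
    ultimately have "(var_mon v, F) \<in> kbasis n E i (Suc i)" by (simp add: kbasis_var_mon_iff)
    with p pe v show False by simp
  qed
qed

lemma cycle_vec_pair_cancel:
  assumes W: "W = insert j (insert w G)" and G: "finite G" "j \<notin> G" "w \<notin> G" and "j \<noteq> w"
    and rep: "co_rep W j = co_rep W w"
  shows "koszul_sign G j * cycle_vec W x (var_mon w, insert j G) +
    koszul_sign G w * cycle_vec W x (var_mon j, insert w G) = (0::'k::field)"
proof -
  have "koszul_sign W w = (if j < w then - koszul_sign G w else (koszul_sign G w :: 'k))"
    unfolding W insert_commute[of j] using G \<open>j \<noteq> w\<close> by (simp add: koszul_sign_insert)
  moreover have "koszul_sign W j = (if w < j then - koszul_sign G j else (koszul_sign G j :: 'k))"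
    unfolding W using G \<open>j \<noteq> w\<close> by (simp add: koszul_sign_insert)
  moreover have "finite W" "w \<in> W" "j \<in> W" "insert j G = W - {w}" "insert w G = W - {j}"
    using W G \<open>j \<noteq> w\<close> by auto
  then have "cycle_vec W x (var_mon w, insert j G) = (if co_rep W w = x then koszul_sign W w else 0 :: 'k)"
    and "cycle_vec W x (var_mon j, insert w G) = (if co_rep W w = x then koszul_sign W j else 0 :: 'k)"
    using rep by (simp_all add: cycle_vec_var_mon)
  ultimately show ?thesis using \<open>j \<noteq> w\<close> by (simp add: mult.commute)
qed

text \<open>A nonzero coefficient of the boundary of a \<open>cycle_vec\<close> could only sit at some
  \<open>x\<^sub>j x\<^sub>w \<otimes> e\<^sub>G\<close> with \<open>j, w\<close> adjacent in the complement; there the two contributions cancel.\<close>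

lemma cycle_vec_cycle:
  assumes rep: "(W, x) \<in> rep_pairs i"
  shows "(cycle_vec W x :: _ \<Rightarrow> 'k::field) \<in> linear_cycles i"
  unfolding linear_cycles_def
proof (intro CollectI conjI ext)
  show "(cycle_vec W x :: _ \<Rightarrow> 'k) \<in> kchains n E i (Suc i)" by (rule cycle_vec_chain[OF rep])
  have W: "W \<subseteq> {0..<n}" "finite W" using rep_pairsD[OF rep] by simp_all
  fix p :: "(nat \<Rightarrow> nat) \<times> nat set"
  obtain u G where pe: "p = (u, G)" by fastforce
  show "kdiff n E i (Suc i) (cycle_vec W x :: _ \<Rightarrow> 'k) p = 0"
  proof (rule ccontr)
    assume nz: "kdiff n E i (Suc i) (cycle_vec W x :: _ \<Rightarrow> 'k) p \<noteq> 0"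
    from kdiff_nonzeroD[OF nz[unfolded pe]] obtain j where
      inb: "(u, G) \<in> kbasis n E (i - 1) (Suc i)" and
      j: "j < n" "j \<notin> G" "1 \<le> u j" "(cycle_vec W x (u(j := u j - 1), insert j G) :: 'k) \<noteq> 0"
      by blast
    from cycle_vec_nonzeroD[OF j(4)] obtain w where
      w: "w \<in> W" "u(j := u j - 1) = var_mon w" "insert j G = W - {w}"
      by blast
    have jw: "j \<noteq> w" "w \<notin> G" and WG: "W = insert j (insert w G)" using w(1,3) j(2) by blast+
    have u: "u = pair_mon j w"
    proof
      fix k show "u k = pair_mon j w k"
        using fun_cong[OF w(2), of k] j(3) jw by (cases "k = j") (auto simp: var_mon_def pair_mon_def)
    qed
    have "\<not> E j w"
      using inb jw unfolding u kbasis_def standard_mon_def pair_mon_def by force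
    then have "co_edge W j w" using jw WG by (auto simp: co_edge_def)
    then have "co_rep W j = co_rep W w" by (intro co_rep_eq r_into_rtranclp)
    moreover have "finite G" "w < n" using W WG by (auto intro: finite_subset)
    ultimately have "kdiff n E i (Suc i) (cycle_vec W x :: _ \<Rightarrow> 'k) (pair_mon j w, G) =
        koszul_sign G j * cycle_vec W x (var_mon w, insert j G) +
        koszul_sign G w * cycle_vec W x (var_mon j, insert w G)"
      using j(1,2) jw by (intro kdiff_pair_mon[OF inb[unfolded u]])
    also have "\<dots> = 0"
      using \<open>finite G\<close> j(2) jw(2,1) \<open>co_rep W j = co_rep W w\<close> by (rule cycle_vec_pair_cancel[OF WG])
    finally have "kdiff n E i (Suc i) (cycle_vec W x :: _ \<Rightarrow> 'k) (pair_mon j w, G) = 0" .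
    then show False using nz pe u by simp
  qed
qed

lemma linear_cycle_zero_at_repeated_var:
  fixes f :: "_ \<Rightarrow> 'k::field"
  assumes f: "f \<in> linear_cycles i" and i: "1 \<le> i"
    and inb: "(var_mon v, F) \<in> kbasis n E i (Suc i)" and vF: "v \<in> F"
  shows "f (var_mon v, F) = 0"
proof -
  have v: "v < n" "F \<subseteq> {0..<n}" "card F = i" using inb by (auto simp: kbasis_var_mon_iff)
  then have "(square_mon v, F - {v}) \<in> kbasis n E (i - 1) (Suc i)"
    using vF i card_ge_0_finite[of F] by (intro kbasis_square_mon) auto
  from kdiff_square_mon[OF this v(1)]
  have "kdiff n E i (Suc i) f (square_mon v, F - {v}) = koszul_sign (F - {v}) v * f (var_mon v, F)"
    using vF by (simp add: insert_absorb)
  moreover have "kdiff n E i (Suc i) f = (\<lambda>_. 0)" using f by (simp add: linear_cycles_def)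
  ultimately show ?thesis by simp
qed

definition cycle_coeff :: "nat set \<Rightarrow> ((nat \<Rightarrow> nat) \<times> nat set \<Rightarrow> 'k::field) \<Rightarrow> nat \<Rightarrow> 'k" where
  "cycle_coeff W f a = koszul_sign W a * f (var_mon a, W - {a})"

lemma cycle_coeff_times_sign: "cycle_coeff W f a * koszul_sign W a = f (var_mon a, W - {a})"
proof -
  have "cycle_coeff W f a * koszul_sign W a = (koszul_sign W a * koszul_sign W a) * f (var_mon a, W - {a})"
    by (simp only: cycle_coeff_def ac_simps)
  then show ?thesis by simp
qed

lemma cycle_coeff_co_edge_less:
  fixes f :: "_ \<Rightarrow> 'k::field"
  assumes f: "f \<in> linear_cycles i" and i: "1 \<le> i" and W: "W \<subseteq> {0..<n}" "card W = Suc i"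
    and ab: "co_edge W a b" "a < b"
  shows "cycle_coeff W f a = cycle_coeff W f b"
proof -
  have fW: "finite W" using W(2) by (simp add: card_ge_0_finite)
  have a: "a \<in> W" "b \<in> W" "\<not> E a b" using ab by (auto simp: co_edge_def)
  define G where "G = W - {a, b}"
  have fG: "finite G" using fW by (simp add: G_def)
  have "card G = i - 1" using W a ab fW unfolding G_def by (simp add: card_Diff_subset)
  then have inb: "(pair_mon a b, G) \<in> kbasis n E (i - 1) (Suc i)"
    using W a ab i by (intro kbasis_pair_mon) (auto simp: G_def)
  have WG: "insert a G = W - {b}" "insert b G = W - {a}" using a ab by (auto simp: G_def)
  have "koszul_sign G a * f (var_mon b, W - {b}) + koszul_sign G b * f (var_mon a, W - {a}) =
      kdiff n E i (Suc i) f (pair_mon a b, G)"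
    unfolding WG[symmetric] by (rule kdiff_pair_mon[symmetric, OF inb]) (use W a ab in \<open>auto simp: G_def\<close>)
  also have "\<dots> = 0" using f by (simp add: linear_cycles_def)
  finally have eq: "koszul_sign G a * f (var_mon b, W - {b}) + koszul_sign G b * f (var_mon a, W - {a}) = 0" .
  have abG: "a \<notin> G" "b \<notin> G" by (auto simp: G_def)
  have "W = insert a (insert b G)" "W = insert b (insert a G)" using a by (auto simp: G_def)
  then have sa: "koszul_sign W a = (koszul_sign G a :: 'k)" and sb: "koszul_sign W b = - (koszul_sign G b :: 'k)"
    using fG abG ab by (simp_all add: koszul_sign_insert)
  have "koszul_sign G a * koszul_sign G b *
      (koszul_sign G a * f (var_mon b, W - {b}) + koszul_sign G b * f (var_mon a, W - {a})) =
      (koszul_sign G a * koszul_sign G a) * (koszul_sign G b * f (var_mon b, W - {b})) +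
      (koszul_sign G b * koszul_sign G b) * (koszul_sign G a * f (var_mon a, W - {a}))"
    by algebra
  with eq have "koszul_sign G b * f (var_mon b, W - {b}) + koszul_sign G a * f (var_mon a, W - {a}) = 0"
    by simp
  then show ?thesis unfolding cycle_coeff_def sa sb by (simp add: add_eq_0_iff)
qed

lemma cycle_coeff_co_edge:
  fixes f :: "_ \<Rightarrow> 'k::field"
  assumes f: "f \<in> linear_cycles i" and i: "1 \<le> i" and W: "W \<subseteq> {0..<n}" "card W = Suc i"
    and ab: "co_edge W a b"
  shows "cycle_coeff W f a = cycle_coeff W f b"
proof (cases "a < b")
  case True
  then show ?thesis by (rule cycle_coeff_co_edge_less[OF f i W ab])
next
  case False
  then have "b < a" using ab by (auto simp: co_edge_def)
  then show ?thesis using cycle_coeff_co_edge_less[OF f i W co_edge_sym[OF ab]] by simp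
qed

lemma cycle_coeff_co_linked:
  fixes f :: "_ \<Rightarrow> 'k::field"
  assumes f: "f \<in> linear_cycles i" and i: "1 \<le> i" and W: "W \<subseteq> {0..<n}" "card W = Suc i"
    and "co_linked W a b"
  shows "cycle_coeff W f a = cycle_coeff W f b"
  using assms(5) by (induct rule: rtranclp_induct) (simp_all add: cycle_coeff_co_edge[OF f i W])

lemma sum_cycle_vec_var_mon:
  assumes v: "v < n" "v \<notin> F" and F: "F \<subseteq> {0..<n}" "card F = i"
  shows "(\<Sum>(W, x)\<in>rep_pairs i. c W x * cycle_vec W x (var_mon v, F)) =
    c (insert v F) (co_rep (insert v F) v) * (koszul_sign (insert v F) v :: 'k::field)"
proof -
  define W0 where "W0 = insert v F"
  define x0 where "x0 = co_rep W0 v"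
  have "finite F" using finite_subset[OF F(1) finite_atLeastLessThan] .
  then have W0: "finite W0" "v \<in> W0" "W0 \<subseteq> {0..<n}" "card W0 = Suc i"
    using F v by (simp_all add: W0_def)
  have rep: "(W0, x0) \<in> rep_pairs i"
    unfolding rep_pairs_def using W0 co_rep_in(1)[OF W0(1,2)] co_rep_idem[OF W0(1,2)] by (simp add: x0_def)
  have only: "c W x * cycle_vec W x (var_mon v, F) =
      (if (W, x) = (W0, x0) then c W0 x0 * koszul_sign W0 v else 0)"
    if "(W, x) \<in> rep_pairs i" for W x
  proof -
    have "v \<in> W \<and> F = W - {v} \<longleftrightarrow> W = W0" using v(2) by (auto simp: W0_def)
    then have "(v \<in> W \<and> F = W - {v} \<and> co_rep W v = x) \<longleftrightarrow> (W, x) = (W0, x0)"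
      by (auto simp: x0_def)
    with rep_pairsD(3)[OF that] show ?thesis by (simp add: cycle_vec_var_mon)
  qed
  have "(\<Sum>(W, x)\<in>rep_pairs i. c W x * cycle_vec W x (var_mon v, F)) = c W0 x0 * koszul_sign W0 v"
    using rep finite_rep_pairs by (simp add: only case_prod_beta cong: sum.cong)
  then show ?thesis by (simp add: W0_def x0_def)
qed

text \<open>A linear cycle vanishes at \<open>x\<^sub>v \<otimes> e\<^sub>F\<close> when \<open>v \<in> F\<close>, and its
  \<open>cycle_coeff\<close> is constant along each component of the complement, so it is the
  combination of the \<open>cycle_vec\<close>s with these constants.\<close>

lemma linear_cycle_expansion:
  fixes f :: "_ \<Rightarrow> 'k::field"
  assumes f: "f \<in> linear_cycles i" and i: "1 \<le> i"
  shows "f = (\<Sum>(W, x)\<in>rep_pairs i. fun_scale (cycle_coeff W f x) (cycle_vec W x))"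
proof
  fix q :: "(nat \<Rightarrow> nat) \<times> nat set"
  have rhs: "(\<Sum>(W, x)\<in>rep_pairs i. fun_scale (cycle_coeff W f x) (cycle_vec W x)) q
      = (\<Sum>(W, x)\<in>rep_pairs i. cycle_coeff W f x * cycle_vec W x q)"
    by (simp add: sum_fun_apply case_prod_beta)
  consider (outside) "q \<notin> kbasis n E i (Suc i)"
    | (inside) v F where "q = (var_mon v, F)" "v < n" "F \<subseteq> {0..<n}" "card F = i"
    using kbasis_linearE kbasis_var_mon_iff by (metis prod.collapse)
  then show "f q = (\<Sum>(W, x)\<in>rep_pairs i. fun_scale (cycle_coeff W f x) (cycle_vec W x)) q"
  proof cases
    case outside
    then have "f q = 0" using f by (cases q) (simp add: linear_cycles_def kchains_def)
    moreover have "cycle_vec W x q = (0::'k)" if "(W, x) \<in> rep_pairs i" for W x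
      using cycle_vec_chain[OF that, where 'k='k] outside unfolding kchains_def by blast
    ultimately show ?thesis unfolding rhs by (simp add: case_prod_beta)
  next
    case inside
    show ?thesis
    proof (cases "v \<in> F")
      case True
      then have "f q = 0"
        using linear_cycle_zero_at_repeated_var[OF f i] inside by (simp add: kbasis_var_mon_iff)
      moreover have "cycle_vec W x q = (0::'k)" if "(W, x) \<in> rep_pairs i" for W x
        using rep_pairsD(3)[OF that] True inside by (auto simp: cycle_vec_var_mon)
      ultimately show ?thesis unfolding rhs by (simp add: case_prod_beta)
    next
      case False
      let ?W = "insert v F"
      have "finite F" using finite_subset[OF inside(3) finite_atLeastLessThan] .
      then have W: "?W \<subseteq> {0..<n}" "card ?W = Suc i" "finite ?W" "v \<in> ?W"
        using inside False by auto
      have "(\<Sum>(W, x)\<in>rep_pairs i. cycle_coeff W f x * cycle_vec W x q) =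
          cycle_coeff ?W f (co_rep ?W v) * koszul_sign ?W v"
        unfolding inside(1) using inside(2) False inside(3,4) by (rule sum_cycle_vec_var_mon)
      also have "\<dots> = cycle_coeff ?W f v * koszul_sign ?W v"
        using cycle_coeff_co_linked[OF f i W(1,2) co_rep_in(2)[OF W(3,4)]] by simp
      also have "\<dots> = f q" using False by (simp add: cycle_coeff_times_sign inside(1))
      finally show ?thesis unfolding rhs by simp
    qed
  qed
qed

lemma kdim_linear_cycles:
  assumes i: "1 \<le> i"
  shows "kdim (linear_cycles i :: (_ \<Rightarrow> 'k::field) set) = card (rep_pairs i)"
proof -
  let ?b = "case_prod cycle_vec :: _ \<Rightarrow> _ \<Rightarrow> 'k"
  let ?pivot = "\<lambda>(W, x). (var_mon x, W - {x})"
  have pivot: "?b p (?pivot p) \<noteq> 0" if "p \<in> rep_pairs i" for p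
  proof -
    obtain W x where p: "p = (W, x)" by fastforce
    show ?thesis using rep_pairsD[OF that[unfolded p]] by (simp add: p cycle_vec_var_mon)
  qed
  have off_pivot: "?b q (?pivot p) = 0"
    if "p \<in> rep_pairs i" "q \<in> rep_pairs i" "q \<noteq> p" for p q
  proof -
    obtain W x W' x' where pq: "p = (W, x)" "q = (W', x')" by fastforce
    have "x \<in> W" "co_rep W x = x" "finite W'"
      using that pq by (auto dest: rep_pairsD)
    moreover have "W = W'" if "x \<in> W'" "W - {x} = W' - {x}"
      using that \<open>x \<in> W\<close> by blast
    ultimately show ?thesis using that(3) pq by (auto simp: cycle_vec_var_mon)
  qed
  note diagonal = diagonal_family_independent[where I = "rep_pairs i" and b = ?b and w = ?pivot,
      OF finite_rep_pairs pivot off_pivot]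
  have span: "linear_cycles i \<subseteq> fun_space.span (?b ` rep_pairs i)"
  proof
    fix f :: "_ \<Rightarrow> 'k" assume "f \<in> linear_cycles i"
    then have "f = (\<Sum>p\<in>rep_pairs i. fun_scale ((\<lambda>(W, x). cycle_coeff W f x) p) (?b p))"
      using linear_cycle_expansion[OF _ i] by (simp add: case_prod_beta)
    also have "\<dots> \<in> fun_space.span (?b ` rep_pairs i)"
      by (intro fun_space.span_sum fun_space.span_scale fun_space.span_base imageI)
    finally show "f \<in> fun_space.span (?b ` rep_pairs i)" .
  qed
  have "?b ` rep_pairs i \<subseteq> linear_cycles i"
    using cycle_vec_cycle by auto
  then have "kdim (linear_cycles i :: (_ \<Rightarrow> 'k) set) = card (?b ` rep_pairs i)"
    using span diagonal(1) by (rule kdim_eq_card_basis)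
  also have "\<dots> = card (rep_pairs i)"
    by (rule diagonal(2))
  finally show ?thesis .
qed

lemma kdiff_image_span:
  assumes fin: "finite (kbasis n E i d)"
  shows "kdiff n E i d ` kchains n E i d \<subseteq>
    fun_space.span ((\<lambda>p. kdiff n E i d (delta p :: _ \<Rightarrow> 'k::field)) ` kbasis n E i d)"
proof
  fix g :: "_ \<Rightarrow> 'k" assume "g \<in> kdiff n E i d ` kchains n E i d"
  then obtain f where f: "f \<in> kchains n E i d" "g = kdiff n E i d f" by blast
  have "f = (\<Sum>p\<in>kbasis n E i d. fun_scale (f p) (delta p))"
    using f(1) fin by (intro finite_support_expansion) (auto simp: kchains_def)
  then have "g = kdiff n E i d (\<Sum>p\<in>kbasis n E i d. fun_scale (f p) (delta p))"
    using f(2) by simp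
  also have "\<dots> = (\<Sum>p\<in>kbasis n E i d. fun_scale (f p) (kdiff n E i d (delta p)))"
    by (rule kdiff_sum[OF fin])
  also have "\<dots> \<in> fun_space.span ((\<lambda>p. kdiff n E i d (delta p)) ` kbasis n E i d)"
    by (intro fun_space.span_sum fun_space.span_scale fun_space.span_base imageI)
  finally show "g \<in> fun_space.span ((\<lambda>p. kdiff n E i d (delta p)) ` kbasis n E i d)" .
qed

text \<open>The boundary of \<open>1 \<otimes> e\<^sub>F\<close> has a nonzero coefficient at \<open>x\<^sub>v \<otimes> e\<^bsub>F - {v}\<^esub>\<close>,
  \<open>v = min F\<close>, where the boundaries of all other \<open>1 \<otimes> e\<^sub>F\<^sub>'\<close> vanish.\<close>

lemma kdiff_delta_at_min:
  assumes "(u, F) \<in> kbasis n E (Suc i) (Suc i)"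
  shows "kdiff n E (Suc i) (Suc i) (delta q) (var_mon (Min F), F - {Min F}) =
    koszul_sign (F - {Min F}) (Min F) * (delta q (u, F) :: 'k::field)"
proof -
  have u: "u = (\<lambda>_. 0)" and F: "F \<subseteq> {0..<n}" "card F = Suc i"
    using assms by (simp_all add: kbasis_const_iff)
  then have "finite F" "F \<noteq> {}" by (auto intro: card_ge_0_finite)
  then have "Min F \<in> F" by simp
  with F have "(var_mon (Min F), F - {Min F}) \<in> kbasis n E i (Suc i)"
    by (auto simp: kbasis_var_mon_iff \<open>finite F\<close>)
  with \<open>Min F \<in> F\<close> show ?thesis by (simp add: u kdiff_var_mon insert_absorb)
qed

lemma kdim_linear_boundaries:
  "kdim (kdiff n E (Suc i) (Suc i) ` kchains n E (Suc i) (Suc i) :: (_ \<Rightarrow> 'k::field) set) =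
    n choose Suc i"
proof -
  let ?K = "kbasis n E (Suc i) (Suc i)"
  let ?b = "\<lambda>p. kdiff n E (Suc i) (Suc i) (delta p :: _ \<Rightarrow> 'k)"
  let ?pivot = "\<lambda>p::(nat \<Rightarrow> nat) \<times> nat set. (var_mon (Min (snd p)), snd p - {Min (snd p)})"
  have pivot: "?b p (?pivot p) \<noteq> 0" if "p \<in> ?K" for p
    using that kdiff_delta_at_min[of "fst p" "snd p" i p, where 'k='k] by (simp add: delta_def)
  have off_pivot: "?b q (?pivot p) = 0" if "p \<in> ?K" "q \<in> ?K" "q \<noteq> p" for p q
    using that kdiff_delta_at_min[of "fst p" "snd p" i q, where 'k='k] by (simp add: delta_def)
  note diagonal = diagonal_family_independent[where I = ?K and b = ?b and w = ?pivot,
      OF finite_kbasis_const pivot off_pivot]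
  have "(delta p :: _ \<Rightarrow> 'k) \<in> kchains n E (Suc i) (Suc i)" if "p \<in> ?K" for p
    using that by (auto simp: kchains_def delta_def)
  then have "?b ` ?K \<subseteq> kdiff n E (Suc i) (Suc i) ` kchains n E (Suc i) (Suc i)"
    by blast
  then have "kdim (kdiff n E (Suc i) (Suc i) ` kchains n E (Suc i) (Suc i) :: (_ \<Rightarrow> 'k) set) =
      card (?b ` ?K)"
    using kdiff_image_span[OF finite_kbasis_const] diagonal(1) by (rule kdim_eq_card_basis)
  then show ?thesis using diagonal(2) card_kbasis_const by simp
qed

lemma card_rep_pairs:
  "card (rep_pairs i) = (\<Sum>W | W \<subseteq> {0..<n} \<and> card W = Suc i. card (co_rep W ` W))"
proof -
  let ?Ws = "{W. W \<subseteq> {0..<n} \<and> card W = Suc i}"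
  have fin: "finite ?Ws" by (rule finite_subset[of _ "Pow {0..<n}"]) auto
  have "rep_pairs i = Sigma ?Ws (\<lambda>W. {x\<in>W. co_rep W x = x})"
    by (auto simp: rep_pairs_def)
  also have "\<dots> = Sigma ?Ws (\<lambda>W. co_rep W ` W)"
    by (rule Sigma_cong) (simp_all add: co_rep_fixed_points card_ge_0_finite)
  finally have "card (rep_pairs i) = card (Sigma ?Ws (\<lambda>W. co_rep W ` W))" by simp
  also have "\<dots> = (\<Sum>W\<in>?Ws. card (co_rep W ` W))"
  proof (rule card_SigmaI[OF fin], rule ballI)
    fix W assume "W \<in> ?Ws"
    then show "finite (co_rep W ` W)" by (intro finite_imageI card_ge_0_finite) simp
  qed
  finally show ?thesis .
qed

theorem betti_linear_strand:
  assumes "1 \<le> i"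
  shows "int (betti TYPE('k::field) n E i (i + 1)) =
    (\<Sum>W | W \<subseteq> {0..<n} \<and> card W = Suc i. int (card (co_rep W ` W))) - int (n choose Suc i)"
proof -
  let ?Ws = "{W. W \<subseteq> {0..<n} \<and> card W = Suc i}"
  have "betti TYPE('k) n E i (i + 1) =
      kdim (linear_cycles i :: (_ \<Rightarrow> 'k) set) -
      kdim (kdiff n E (Suc i) (Suc i) ` kchains n E (Suc i) (Suc i) :: (_ \<Rightarrow> 'k) set)"
    using assms unfolding betti_def linear_cycles_def by simp
  also have "\<dots> = card (rep_pairs i) - (n choose Suc i)"
    by (simp only: kdim_linear_cycles[OF assms] kdim_linear_boundaries)
  finally have "betti TYPE('k) n E i (i + 1) = card (rep_pairs i) - (n choose Suc i)" .
  moreover have "n choose Suc i \<le> card (rep_pairs i)"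
  proof -
    have "n choose Suc i = (\<Sum>W\<in>?Ws. 1)" using n_subsets[of "{0..<n}" "Suc i"] by simp
    also have "\<dots> \<le> (\<Sum>W\<in>?Ws. card (co_rep W ` W))"
    proof (rule sum_mono)
      fix W assume "W \<in> ?Ws"
      then have "finite W" "W \<noteq> {}" by (auto intro: card_ge_0_finite)
      then show "1 \<le> card (co_rep W ` W)" by (simp add: Suc_le_eq card_gt_0_iff)
    qed
    finally show ?thesis by (simp add: card_rep_pairs)
  qed
  ultimately have "int (betti TYPE('k) n E i (i + 1)) = int (card (rep_pairs i)) - int (n choose Suc i)"
    by simp
  then show ?thesis by (simp add: card_rep_pairs)
qed

end

section \<open>The complement of the cycle \<open>C\<^sub>m\<close>\<close>

definition cyc_succ :: "nat \<Rightarrow> nat \<Rightarrow> nat" where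
  "cyc_succ m q = (q + 1) mod m"

definition cyc_pred :: "nat \<Rightarrow> nat \<Rightarrow> nat" where
  "cyc_pred m q = (q + (m - 1)) mod m"

definition cyc_adj :: "nat \<Rightarrow> nat \<Rightarrow> nat \<Rightarrow> bool" where
  "cyc_adj m x y \<longleftrightarrow> y = cyc_succ m x \<or> x = cyc_succ m y"

lemma cyc_adj_sym: "cyc_adj m x y \<longleftrightarrow> cyc_adj m y x"
  by (auto simp: cyc_adj_def)

lemma cyc_succ_less: "0 < m \<Longrightarrow> cyc_succ m q < m"
  by (simp add: cyc_succ_def)

lemma cyc_pred_less: "0 < m \<Longrightarrow> cyc_pred m q < m"
  by (simp add: cyc_pred_def)

lemma cyc_succ_pred:
  assumes "q < m"
  shows "cyc_succ m (cyc_pred m q) = q"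
proof -
  have "cyc_succ m (cyc_pred m q) = (q + (m - 1) + 1) mod m"
    unfolding cyc_succ_def cyc_pred_def by (rule mod_add_left_eq)
  also have "q + (m - 1) + 1 = q + m" using assms by simp
  finally show ?thesis using assms by simp
qed

lemma cyc_pred_succ:
  assumes "q < m"
  shows "cyc_pred m (cyc_succ m q) = q"
proof -
  have "cyc_pred m (cyc_succ m q) = (q + 1 + (m - 1)) mod m"
    unfolding cyc_succ_def cyc_pred_def by (rule mod_add_left_eq)
  also have "q + 1 + (m - 1) = q + m" using assms by simp
  finally show ?thesis using assms by simp
qed

lemma cyc_adj_less_iff:
  assumes "x < y" "y < m"
  shows "cyc_adj m x y \<longleftrightarrow> y - x = 1 \<or> m - (y - x) = 1"
proof -
  have "(x + 1) mod m = y \<longleftrightarrow> y - x = 1" using assms by auto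
  moreover have "(y + 1) mod m = x \<longleftrightarrow> m - (y - x) = 1"
  proof (cases "y + 1 < m")
    case False
    then have "y + 1 = m" using assms by auto
    then show ?thesis using assms by auto
  qed (use assms in auto)
  ultimately show ?thesis by (auto simp: cyc_adj_def cyc_succ_def)
qed

text \<open>Arithmetic on the cycle is done on offsets: a point is written \<open>(a + j) mod m\<close> for a base
  point \<open>a\<close>, and adjacency then depends on the offsets only.\<close>

lemma mod_add_left_cancel_nat: "(a + j) mod m = (a + k) mod m \<longleftrightarrow> j mod m = k mod (m::nat)"
  using cong_add_lcancel_nat[unfolded cong_def] .

lemma cyc_offsets:
  assumes "q < m"
  shows "q = (q + 0) mod m" "cyc_succ m q = (q + 1) mod m"
    "cyc_succ m (cyc_succ m q) = (q + 2) mod m" "cyc_pred m q = (q + (m - 1)) mod m"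
  using assms by (simp_all add: cyc_succ_def cyc_pred_def mod_Suc_eq)

lemma cyc_succ_offset: "cyc_succ m ((a + j) mod m) = (a + (j + 1)) mod m"
  by (simp add: cyc_succ_def mod_Suc_eq add.assoc)

lemma cyc_adj_offsets:
  "cyc_adj m ((a + j) mod m) ((a + k) mod m) \<longleftrightarrow> k mod m = (j + 1) mod m \<or> j mod m = (k + 1) mod m"
  using mod_add_left_cancel_nat[of a k m "Suc j"] mod_add_left_cancel_nat[of a j m "Suc k"]
  by (simp add: cyc_adj_def cyc_succ_offset)

lemma suc_mod_eq_0_iff:
  assumes "k < m"
  shows "Suc k mod m = 0 \<longleftrightarrow> Suc k = m"
proof (cases "Suc k < m")
  case False
  then have "Suc k = m" using assms by simp
  then show ?thesis by simp
qed simp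

lemma suc_mod_eq_1_iff:
  assumes "k < m" "2 \<le> m"
  shows "Suc k mod m = 1 \<longleftrightarrow> k = 0"
proof (cases "Suc k < m")
  case False
  then have "Suc k = m" using assms by simp
  then show ?thesis using assms by auto
qed simp

definition cyc_split_sets :: "nat \<Rightarrow> nat set set" where
  "cyc_split_sets m =
    (\<lambda>q. {q, cyc_succ m q}) ` {..<m} \<union> (\<lambda>q. {cyc_pred m q, q, cyc_succ m q}) ` {..<m}"

lemma empty_notin_cyc_split_sets: "{} \<notin> cyc_split_sets m"
  by (auto simp: cyc_split_sets_def)

definition cyc_co_edge :: "nat \<Rightarrow> nat set \<Rightarrow> nat \<Rightarrow> nat \<Rightarrow> bool" where
  "cyc_co_edge m Q x y \<longleftrightarrow> x \<in> Q \<and> y \<in> Q \<and> x \<noteq> y \<and> \<not> cyc_adj m x y"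

lemma cyc_co_edge_sym: "cyc_co_edge m Q x y \<Longrightarrow> cyc_co_edge m Q y x"
  by (auto simp: cyc_co_edge_def cyc_adj_sym)

lemma cyc_co_linked_sym: "(cyc_co_edge m Q)\<^sup>*\<^sup>* x y \<Longrightarrow> (cyc_co_edge m Q)\<^sup>*\<^sup>* y x"
  by (induct rule: rtranclp_induct)
    (auto dest: cyc_co_edge_sym intro: converse_rtranclp_into_rtranclp)

context
  fixes m :: nat
  assumes m5: "5 \<le> m"
begin

lemma cyc_neighbours:
  assumes "q < m"
  shows "cyc_succ m q \<noteq> q" "cyc_pred m q \<noteq> q" "cyc_pred m q \<noteq> cyc_succ m q"
    "cyc_adj m q (cyc_succ m q)" "cyc_adj m (cyc_pred m q) q"
    "\<not> cyc_adj m (cyc_pred m q) (cyc_succ m q)"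
proof -
  note offsets = cyc_offsets[OF assms]
  show "cyc_succ m q \<noteq> q" using mod_add_left_cancel_nat[of q 1 m 0] m5 assms offsets by simp
  show "cyc_pred m q \<noteq> q" using mod_add_left_cancel_nat[of q "m - 1" m 0] m5 assms offsets by simp
  show "cyc_pred m q \<noteq> cyc_succ m q"
    using mod_add_left_cancel_nat[of q "m - 1" m 1] m5 offsets by simp
  show "cyc_adj m q (cyc_succ m q)" by (simp add: cyc_adj_def)
  show "cyc_adj m (cyc_pred m q) q" using cyc_adj_offsets[of m q "m - 1" 0] m5 assms offsets by simp
  show "\<not> cyc_adj m (cyc_pred m q) (cyc_succ m q)"
    using cyc_adj_offsets[of m q "m - 1" 1] m5 offsets by simp
qed

lemma cyc_edge_inj:
  assumes q: "q < m" "q' < m" and eq: "{q, cyc_succ m q} = {q', cyc_succ m q'}"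
  shows "q = q'"
proof (rule ccontr)
  assume "q \<noteq> q'"
  then have "q = cyc_succ m q'" "cyc_succ m q = q'" using eq by (auto simp: doubleton_eq_iff)
  then have "(q' + 2) mod m = (q' + 0) mod m" using cyc_offsets(1,3)[OF q(2)] by simp
  then show False using mod_add_left_cancel_nat[of q' 2 m 0] m5 by simp
qed

lemma cyc_path_succ_neq:
  assumes q: "q' < m"
  shows "{cyc_pred m (cyc_succ m q'), cyc_succ m q', cyc_succ m (cyc_succ m q')} \<noteq>
    {cyc_pred m q', q', cyc_succ m q'}"
proof
  assume eq: "{cyc_pred m (cyc_succ m q'), cyc_succ m q', cyc_succ m (cyc_succ m q')} =
    {cyc_pred m q', q', cyc_succ m q'}"
  have "cyc_succ m (cyc_succ m q') \<in> {cyc_pred m q', q', cyc_succ m q'}"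
    using eq by blast
  moreover have "(q' + 2) mod m \<noteq> (q' + (m - 1)) mod m" "(q' + 2) mod m \<noteq> (q' + 0) mod m"
    "(q' + 2) mod m \<noteq> (q' + 1) mod m"
    using mod_add_left_cancel_nat[of q' 2 m "m - 1"] mod_add_left_cancel_nat[of q' 2 m 0]
      mod_add_left_cancel_nat[of q' 2 m 1] m5 by simp_all
  ultimately show False using cyc_offsets[OF q] by auto
qed

lemma cyc_path_inj:
  assumes q: "q < m" "q' < m"
    and eq: "{cyc_pred m q, q, cyc_succ m q} = {cyc_pred m q', q', cyc_succ m q'}"
  shows "q = q'"
proof -
  have "q \<in> {cyc_pred m q', q', cyc_succ m q'}" using eq by blast
  then consider "q = cyc_pred m q'" | "q = q'" | "q = cyc_succ m q'" by blast
  then show ?thesis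
  proof cases
    case 1
    then have "q' = cyc_succ m q" using cyc_succ_pred[OF q(2)] by simp
    then show ?thesis using cyc_path_succ_neq[OF q(1)] eq by metis
  next
    case 3
    then show ?thesis using cyc_path_succ_neq[OF q(2)] eq by metis
  qed simp
qed

lemma sum_cyc_split_sets: "(\<Sum>A\<in>cyc_split_sets m. h (card A)) = m * h 2 + m * (h 3 :: nat)"
proof -
  let ?edge = "\<lambda>q. {q, cyc_succ m q}" and ?path = "\<lambda>q. {cyc_pred m q, q, cyc_succ m q}"
  have card_edge: "card (?edge q) = 2" and card_path: "card (?path q) = 3" if "q < m" for q
    using cyc_neighbours[OF that] by auto
  have "inj_on ?edge {..<m}" by (rule inj_onI) (use cyc_edge_inj in auto)
  moreover have "inj_on ?path {..<m}" by (rule inj_onI) (use cyc_path_inj in auto)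
  moreover have "?edge ` {..<m} \<inter> ?path ` {..<m} = {}" using card_edge card_path by force
  ultimately have "(\<Sum>A\<in>cyc_split_sets m. h (card A)) =
      (\<Sum>q<m. h (card (?edge q))) + (\<Sum>q<m. h (card (?path q)))"
    unfolding cyc_split_sets_def by (simp add: sum.union_disjoint sum.reindex)
  also have "\<dots> = m * h 2 + m * h 3" using card_edge card_path by simp
  finally show ?thesis .
qed

lemma cyc_not_adj_far:
  assumes a: "a < m" and z: "z < m"
    and far: "z \<notin> {cyc_pred m a, a, cyc_succ m a, cyc_succ m (cyc_succ m a)}"
  shows "\<not> cyc_adj m a z" and "\<not> cyc_adj m z (cyc_succ m a)"
proof -
  note offs = cyc_offsets[OF a]
  define k where "k = (z + m - a) mod m"
  have "(a + k) mod m = (a + (z + m - a)) mod m" unfolding k_def by (simp add: mod_add_right_eq)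
  also have "a + (z + m - a) = z + m" using a by simp
  finally have zk: "z = (a + k) mod m" using z by simp
  have km: "k < m" using a by (simp add: k_def)
  have "z \<noteq> (a + 0) mod m" "z \<noteq> (a + 1) mod m" "z \<noteq> (a + 2) mod m" "z \<noteq> (a + (m - 1)) mod m"
    using far offs by (simp_all only: insert_iff de_Morgan_disj) (metis offs(1))+
  moreover have "k \<noteq> j" if "j < m" "z \<noteq> (a + j) mod m" for j
    using that zk km mod_add_left_cancel_nat[of a k m j] by auto
  ultimately have k: "k \<noteq> 0" "k \<noteq> 1" "k \<noteq> 2" "k \<noteq> m - 1" using m5 by simp_all
  show "\<not> cyc_adj m a z"
    using cyc_adj_offsets[of m a 0 k] km k m5 a zk suc_mod_eq_0_iff[OF km] by auto
  show "\<not> cyc_adj m z (cyc_succ m a)"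
    using cyc_adj_offsets[of m a k 1] km k m5 a zk offs suc_mod_eq_1_iff[OF km] by auto
qed

text \<open>The complement of \<open>C\<^sub>m\<close> contains the path \<open>a, a + 2, a - 1, a + 1\<close>.\<close>

lemma cycle_complement_four_path:
  assumes a: "a < m"
    and Q: "{cyc_pred m a, a, cyc_succ m a, cyc_succ m (cyc_succ m a)} \<subseteq> Q"
  shows "(cyc_co_edge m Q)\<^sup>*\<^sup>* a (cyc_succ m a)"
proof -
  note offs = cyc_offsets(2-4)[OF a]
  have "cyc_co_edge m Q a (cyc_succ m (cyc_succ m a))"
    using Q mod_add_left_cancel_nat[of a 0 m 2] cyc_adj_offsets[of m a 0 2] a m5 offs
    by (auto simp: cyc_co_edge_def)
  moreover have "cyc_co_edge m Q (cyc_succ m (cyc_succ m a)) (cyc_pred m a)"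
    using Q mod_add_left_cancel_nat[of a 2 m "m - 1"] cyc_adj_offsets[of m a 2 "m - 1"] m5 offs
    by (auto simp: cyc_co_edge_def)
  moreover have "cyc_co_edge m Q (cyc_pred m a) (cyc_succ m a)"
    using Q mod_add_left_cancel_nat[of a "m - 1" m 1] cyc_adj_offsets[of m a "m - 1" 1] m5 offs
    by (auto simp: cyc_co_edge_def)
  ultimately show ?thesis by (meson r_into_rtranclp rtranclp.rtrancl_into_rtrancl)
qed

text \<open>Consecutive points \<open>a\<close>, \<open>a + 1\<close> of \<open>Q\<close> are joined through any point of \<open>Q\<close> outside
  \<open>{a - 1, a, a + 1, a + 2}\<close>; if there is none, \<open>Q\<close> is an edge, a 3-path or contains the
  four-point path above.\<close>

lemma cycle_complement_links_succ:
  assumes Q: "Q \<subseteq> {..<m}"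
    and not_split: "Q \<notin> cyc_split_sets m"
    and a: "a \<in> Q" and b: "cyc_succ m a \<in> Q"
  shows "(cyc_co_edge m Q)\<^sup>*\<^sup>* a (cyc_succ m a)"
proof (cases "\<exists>z\<in>Q. z \<notin> {cyc_pred m a, a, cyc_succ m a, cyc_succ m (cyc_succ m a)}")
  case True
  then obtain z where z: "z \<in> Q" "z \<notin> {cyc_pred m a, a, cyc_succ m a, cyc_succ m (cyc_succ m a)}"
    by blast
  have "a < m" "z < m" using a z Q by auto
  with z have "cyc_co_edge m Q a z" "cyc_co_edge m Q z (cyc_succ m a)"
    using cyc_not_adj_far a b by (auto simp: cyc_co_edge_def)
  then show ?thesis by (meson r_into_rtranclp rtranclp.rtrancl_into_rtrancl)
next
  case False
  then have sub: "Q \<subseteq> {cyc_pred m a, a, cyc_succ m a, cyc_succ m (cyc_succ m a)}" by blast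
  have am: "a < m" using a Q by auto
  consider (four) "cyc_pred m a \<in> Q" "cyc_succ m (cyc_succ m a) \<in> Q"
    | (left) "cyc_pred m a \<in> Q" "cyc_succ m (cyc_succ m a) \<notin> Q"
    | (right) "cyc_pred m a \<notin> Q" "cyc_succ m (cyc_succ m a) \<in> Q"
    | (edge) "cyc_pred m a \<notin> Q" "cyc_succ m (cyc_succ m a) \<notin> Q"
    by blast
  then show ?thesis
  proof cases
    case four
    then show ?thesis using cycle_complement_four_path[OF am] a b by blast
  next
    case left
    then have "Q = {cyc_pred m a, a, cyc_succ m a}" using sub a b by auto
    then show ?thesis using not_split am by (auto simp: cyc_split_sets_def)
  next
    case right
    then have "Q = {cyc_pred m (cyc_succ m a), cyc_succ m a, cyc_succ m (cyc_succ m a)}"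
      using sub a b cyc_pred_succ[OF am] by auto
    then show ?thesis using not_split b Q by (auto simp: cyc_split_sets_def)
  next
    case edge
    then have "Q = {a, cyc_succ m a}" using sub a b by auto
    then show ?thesis using not_split am by (auto simp: cyc_split_sets_def)
  qed
qed

lemma cycle_complement_connected:
  assumes Q: "Q \<subseteq> {..<m}"
    and not_split: "Q \<notin> cyc_split_sets m"
    and ab: "a \<in> Q" "b \<in> Q"
  shows "(cyc_co_edge m Q)\<^sup>*\<^sup>* a b"
proof (cases "a = b \<or> cyc_co_edge m Q a b")
  case True
  then show ?thesis by auto
next
  case False
  then have "b = cyc_succ m a \<or> a = cyc_succ m b" using ab by (auto simp: cyc_co_edge_def cyc_adj_def)
  then show ?thesis
    using cycle_complement_links_succ[OF Q not_split] ab cyc_co_linked_sym by metis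
qed

end

section \<open>The circulant graph as \<open>l\<close> copies of \<open>C\<^sub>m\<close>\<close>

locale circulant_join =
  fixes l m :: nat
  assumes m5: "5 \<le> m" and l2: "2 \<le> l"
begin

definition jumps :: "nat set" where
  "jumps = {s \<in> {1 .. (l * m) div 2}. s = l \<or> \<not> l dvd s}"

abbreviation G :: "nat \<Rightarrow> nat \<Rightarrow> bool" where
  "G \<equiv> circulant_adj (l * m) jumps"

lemma l_pos: "0 < l" and m_pos: "0 < m"
  using l2 m5 by simp_all

lemma circ_dist_eq_l_iff:
  assumes ab: "a < b" "b < l * m" and res: "a mod l = b mod l"
  shows "circ_dist (l * m) a b = l \<longleftrightarrow> cyc_adj m (a div l) (b div l)"
proof -
  define qa where "qa = a div l"
  define qb where "qb = b div l"
  have a_eq: "a = l * qa + a mod l" by (simp add: qa_def)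
  have b_eq: "b = l * qb + a mod l" using res by (simp add: qb_def)
  have qab: "qa < qb"
    using ab a_eq b_eq by (metis add_less_cancel_right mult_less_cancel1)
  have qbm: "qb < m" using ab l_pos by (simp add: qb_def less_mult_imp_div_less mult.commute)
  have D: "b - a = l * (qb - qa)" using a_eq b_eq by (simp add: diff_mult_distrib2)
  then have "l * m - (b - a) = l * (m - (qb - qa))" by (simp add: diff_mult_distrib2)
  then have "circ_dist (l * m) a b = min (l * (qb - qa)) (l * (m - (qb - qa)))"
    using ab D by (simp add: circ_dist_def Let_def)
  also have "\<dots> = l * min (qb - qa) (m - (qb - qa))" using l_pos by (simp add: min_def)
  finally have "circ_dist (l * m) a b = l \<longleftrightarrow> qb - qa = 1 \<or> m - (qb - qa) = 1"
    using l_pos qab qbm by (auto simp: min_def)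
  then show ?thesis using cyc_adj_less_iff[OF qab qbm] by (simp add: qa_def qb_def)
qed

lemma circulant_adj_less_iff:
  assumes ab: "a < b" "b < l * m"
  shows "G a b \<longleftrightarrow> \<not> (a mod l = b mod l \<and> \<not> cyc_adj m (a div l) (b div l))"
proof -
  define D where "D = b - a"
  have D: "1 \<le> D" "D < l * m" using ab by (auto simp: D_def)
  define d where "d = min D (l * m - D)"
  have "circ_dist (l * m) a b = d" using ab by (simp add: circ_dist_def d_def D_def Let_def)
  moreover have "d \<in> {1 .. l * m div 2}" using D by (auto simp: d_def)
  moreover have "l dvd d \<longleftrightarrow> a mod l = b mod l"
  proof -
    have "l dvd (l * m - D) \<longleftrightarrow> l dvd D"
      using D by (metis dvd_diff_nat dvd_triv_left less_imp_le_nat diff_diff_cancel)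
    moreover have "l dvd D \<longleftrightarrow> a mod l = b mod l"
      using mod_eq_dvd_iff_nat[of a b l] ab by (auto simp: D_def)
    ultimately show ?thesis by (simp add: d_def min_def)
  qed
  ultimately have "G a b \<longleftrightarrow> circ_dist (l * m) a b = l \<or> a mod l \<noteq> b mod l"
    using ab by (auto simp: circulant_adj_def jumps_def)
  then show ?thesis using circ_dist_eq_l_iff[OF ab] by auto
qed

lemma circulant_adj_iff:
  assumes "a < l * m" "b < l * m" "a \<noteq> b"
  shows "G a b \<longleftrightarrow> \<not> (a mod l = b mod l \<and> \<not> cyc_adj m (a div l) (b div l))"
proof (cases "a < b")
  case True
  then show ?thesis using circulant_adj_less_iff assms by simp
next
  case False
  then have "b < a" using assms by simp
  moreover have "G a b \<longleftrightarrow> G b a" by (auto simp: circulant_adj_def circ_dist_def Let_def)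
  ultimately show ?thesis
    using circulant_adj_less_iff[of b a] assms cyc_adj_sym[of m "a div l" "b div l"] by auto
qed

sublocale simple_graph "l * m" G
  by unfold_locales (auto simp: circulant_adj_def circ_dist_def Let_def)

lemma co_edge_iff:
  assumes "W \<subseteq> {0..<l * m}"
  shows "co_edge W a b \<longleftrightarrow>
    a \<in> W \<and> b \<in> W \<and> a \<noteq> b \<and> a mod l = b mod l \<and> \<not> cyc_adj m (a div l) (b div l)"
proof (cases "a \<in> W \<and> b \<in> W \<and> a \<noteq> b")
  case True
  then have "a < l * m" "b < l * m" using assms by auto
  then show ?thesis using circulant_adj_iff[of a b] True by (auto simp: co_edge_def)
qed (auto simp: co_edge_def)

definition vtx :: "nat \<Rightarrow> nat \<Rightarrow> nat" where
  "vtx r q = r + l * q"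

definition res_class :: "nat \<Rightarrow> nat set" where
  "res_class r = {v. v < l * m \<and> v mod l = r}"

definition trace :: "nat set \<Rightarrow> nat \<Rightarrow> nat set" where
  "trace W r = {q. q < m \<and> vtx r q \<in> W}"

lemma vtx_eq_iff [simp]: "vtx r q = vtx r q' \<longleftrightarrow> q = q'"
  using l_pos by (simp add: vtx_def)

lemma vtx_div [simp]: "r < l \<Longrightarrow> vtx r q div l = q"
  and vtx_mod [simp]: "r < l \<Longrightarrow> vtx r q mod l = r"
  by (simp_all add: vtx_def)

lemma vtx_less: "\<lbrakk>r < l; q < m\<rbrakk> \<Longrightarrow> vtx r q < l * m"
proof -
  assume "r < l" "q < m"
  then have "r + l * q < l * (q + 1)" by simp
  also have "\<dots> \<le> l * m" using \<open>q < m\<close> by (intro mult_le_mono2) simp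
  finally show ?thesis by (simp add: vtx_def)
qed

lemma res_class_eq: "r < l \<Longrightarrow> res_class r = vtx r ` {..<m}"
proof (intro equalityI subsetI)
  fix v assume r: "r < l" and v: "v \<in> res_class r"
  then have "v = vtx r (v div l)"
    using div_mult_mod_eq[of v l] by (simp add: res_class_def vtx_def mult.commute)
  moreover have "v div l < m"
    using v l_pos by (simp add: res_class_def less_mult_imp_div_less mult.commute)
  ultimately show "v \<in> vtx r ` {..<m}" by blast
qed (auto simp: res_class_def vtx_def vtx_less[unfolded vtx_def])

lemma card_res_class: "r < l \<Longrightarrow> card (res_class r) = m"
  by (simp add: res_class_eq card_image inj_on_def)

lemma res_class_subset: "res_class r \<subseteq> {0..<l * m}"
  by (auto simp: res_class_def)

lemma Int_res_class: "r < l \<Longrightarrow> W \<inter> res_class r = vtx r ` trace W r"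
  by (auto simp: res_class_eq trace_def)

lemma co_edge_vtx_iff:
  assumes W: "W \<subseteq> {0..<l * m}" and r: "r < l"
  shows "co_edge W (vtx r q) (vtx r q') \<longleftrightarrow> q < m \<and> q' < m \<and> cyc_co_edge m (trace W r) q q'"
proof -
  have bound: "q < m" if "vtx r q \<in> W" for q
  proof -
    have "r + l * q < l * m" using that W by (auto simp: vtx_def)
    then have "l * q < l * m" by linarith
    then show ?thesis by simp
  qed
  show ?thesis
    using r bound unfolding co_edge_iff[OF W] by (auto simp: cyc_co_edge_def trace_def)
qed

lemma co_edge_from_class:
  assumes W: "W \<subseteq> {0..<l * m}" and r: "r < l" and e: "co_edge W (vtx r q) w"
  obtains q' where "w = vtx r q'" "cyc_co_edge m (trace W r) q q'"
proof -
  have "w \<in> W \<inter> res_class r"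
    using e r W unfolding co_edge_iff[OF W] by (auto simp: res_class_def vtx_def)
  then obtain q' where "w = vtx r q'" by (auto simp: Int_res_class[OF r])
  with e show thesis using that co_edge_vtx_iff[OF W r] by blast
qed

lemma co_linked_same_class:
  assumes "W \<subseteq> {0..<l * m}" "co_linked W a b"
  shows "a mod l = b mod l"
  using assms(2) by (induct rule: rtranclp_induct) (auto simp: co_edge_iff[OF assms(1)])

context
  fixes W :: "nat set" and r :: nat
  assumes W: "W \<subseteq> {0..<l * m}" and r: "r < l"
begin

lemma vtx_trace: "q \<in> trace W r \<Longrightarrow> vtx r q \<in> W"
  by (simp add: trace_def)

lemma no_co_edge_vtx:
  assumes "\<And>q'. \<not> cyc_co_edge m (trace W r) q q'"
  shows "\<not> co_edge W (vtx r q) w"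
  using co_edge_from_class[OF W r] assms by metis

lemma co_linked_vtx:
  assumes "(cyc_co_edge m (trace W r))\<^sup>*\<^sup>* q q'"
  shows "co_linked W (vtx r q) (vtx r q')"
  using assms
proof (induct rule: rtranclp_induct)
  case (step y z)
  then have "co_edge W (vtx r y) (vtx r z)"
    using co_edge_vtx_iff[OF W r] by (auto simp: cyc_co_edge_def trace_def)
  with step(3) show ?case by simp
qed simp

lemma card_co_rep_trace_edge:
  assumes q: "q < m" and Q: "trace W r = {q, cyc_succ m q}"
  shows "card (co_rep W ` vtx r ` trace W r) = 2"
proof -
  note nb = cyc_neighbours[OF m5 q]
  have "\<not> cyc_co_edge m (trace W r) x y" for x y
    using nb by (auto simp: Q cyc_co_edge_def cyc_adj_sym)
  moreover have "finite W" using W finite_subset by blast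
  ultimately have "co_rep W (vtx r x) = vtx r x" if "x \<in> trace W r" for x
    using co_rep_isolated[OF _ vtx_trace[OF that] no_co_edge_vtx] by blast
  then have "co_rep W ` vtx r ` trace W r = vtx r ` trace W r"
    unfolding image_image by (intro image_cong) simp_all
  then show ?thesis using nb by (simp add: Q)
qed

lemma card_co_rep_trace_path:
  assumes q: "q < m" and Q: "trace W r = {cyc_pred m q, q, cyc_succ m q}"
  shows "card (co_rep W ` vtx r ` trace W r) = 2"
proof -
  note nb = cyc_neighbours[OF m5 q]
  have fW: "finite W" using W finite_subset by blast
  have "\<not> cyc_co_edge m (trace W r) q y" for y
    using nb by (auto simp: Q cyc_co_edge_def cyc_adj_sym)
  then have mid_isolated: "\<not> co_edge W (vtx r q) w" for w by (rule no_co_edge_vtx)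
  then have mid: "co_rep W (vtx r q) = vtx r q"
    using co_rep_isolated[OF fW vtx_trace] by (simp add: Q)
  have "cyc_co_edge m (trace W r) (cyc_pred m q) (cyc_succ m q)"
    using nb by (simp add: Q cyc_co_edge_def)
  then have ends: "co_rep W (vtx r (cyc_succ m q)) = co_rep W (vtx r (cyc_pred m q))"
    using co_linked_vtx co_rep_eq by (metis r_into_rtranclp)
  have "co_rep W (vtx r (cyc_pred m q)) \<noteq> vtx r q"
  proof
    assume "co_rep W (vtx r (cyc_pred m q)) = vtx r q"
    then have "co_linked W (vtx r q) (vtx r (cyc_pred m q))"
      using co_rep_in(2)[OF fW vtx_trace, of "cyc_pred m q"] co_linked_sym by (simp add: Q)
    then show False using co_linked_isolated[OF mid_isolated] nb(2) by fastforce
  qed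
  moreover have "co_rep W ` vtx r ` trace W r = {vtx r q, co_rep W (vtx r (cyc_pred m q))}"
    using mid ends by (auto simp: Q)
  ultimately show ?thesis by simp
qed

lemma card_co_rep_trace_connected:
  assumes "trace W r \<noteq> {}" "trace W r \<notin> cyc_split_sets m"
  shows "card (co_rep W ` vtx r ` trace W r) = 1"
proof -
  obtain q0 where q0: "q0 \<in> trace W r" using assms(1) by blast
  have "trace W r \<subseteq> {..<m}" by (auto simp: trace_def)
  then have "co_rep W (vtx r q) = co_rep W (vtx r q0)" if "q \<in> trace W r" for q
    using co_rep_eq co_linked_vtx cycle_complement_connected[OF m5 _ assms(2) that q0] by metis
  then have "co_rep W ` vtx r ` trace W r = {co_rep W (vtx r q0)}" using q0 by blast
  then show ?thesis by simp
qed

lemma card_co_rep_class: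
  "card (co_rep W ` (W \<inter> res_class r)) =
    of_bool (trace W r \<noteq> {}) + of_bool (trace W r \<in> cyc_split_sets m)"
proof -
  consider "trace W r = {}" | "trace W r \<noteq> {}" "trace W r \<notin> cyc_split_sets m"
    | q where "q < m" "trace W r = {q, cyc_succ m q}"
    | q where "q < m" "trace W r = {cyc_pred m q, q, cyc_succ m q}"
    by (auto simp: cyc_split_sets_def)
  then have "card (co_rep W ` vtx r ` trace W r) =
      of_bool (trace W r \<noteq> {}) + of_bool (trace W r \<in> cyc_split_sets m)"
  proof cases
    case (3 q)
    then have "trace W r \<in> cyc_split_sets m" by (auto simp: cyc_split_sets_def)
    with card_co_rep_trace_edge[OF 3] show ?thesis by auto
  next
    case (4 q)
    then have "trace W r \<in> cyc_split_sets m" by (auto simp: cyc_split_sets_def)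
    with card_co_rep_trace_path[OF 4] show ?thesis by auto
  qed (simp_all add: card_co_rep_trace_connected empty_notin_cyc_split_sets)
  then show ?thesis by (simp only: Int_res_class[OF r])
qed

end

lemma card_co_rep_sum_classes:
  assumes W: "W \<subseteq> {0..<l * m}"
  shows "card (co_rep W ` W) =
    (\<Sum>r<l. of_bool (trace W r \<noteq> {}) + of_bool (trace W r \<in> cyc_split_sets m))"
proof -
  have fW: "finite W" using W finite_subset by blast
  have "W = (\<Union>r<l. W \<inter> res_class r)" using W l_pos by (auto simp: res_class_def)
  then have "co_rep W ` W = (\<Union>r<l. co_rep W ` (W \<inter> res_class r))" by blast
  moreover have into: "co_rep W ` (W \<inter> res_class r) \<subseteq> res_class r" for r
  proof clarify
    fix a assume a: "a \<in> W" "a \<in> res_class r"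
    then show "co_rep W a \<in> res_class r"
      using co_rep_in[OF fW a(1)] co_linked_same_class[OF W] W by (auto simp: res_class_def)
  qed
  moreover have "card (\<Union>r<l. co_rep W ` (W \<inter> res_class r)) =
      (\<Sum>r<l. card (co_rep W ` (W \<inter> res_class r)))"
  proof (rule card_UN_disjoint)
    show "\<forall>r\<in>{..<l}. \<forall>s\<in>{..<l}. r \<noteq> s \<longrightarrow>
        co_rep W ` (W \<inter> res_class r) \<inter> co_rep W ` (W \<inter> res_class s) = {}"
    proof (intro ballI impI)
      fix r s :: nat assume "r \<noteq> s"
      then have "res_class r \<inter> res_class s = {}" by (auto simp: res_class_def)
      then show "co_rep W ` (W \<inter> res_class r) \<inter> co_rep W ` (W \<inter> res_class s) = {}"
        using into[of r] into[of s] by blast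
    qed
  qed (use fW in simp_all)
  ultimately have "card (co_rep W ` W) = (\<Sum>r<l. card (co_rep W ` (W \<inter> res_class r)))"
    by simp
  then show ?thesis by (simp add: card_co_rep_class[OF W])
qed

end

section \<open>Counting the components\<close>

lemma card_subsets_with_trace:
  assumes CX: "C \<subseteq> X" and AC: "A \<subseteq> C" and fX: "finite X"
  shows "card {W. W \<subseteq> X \<and> card W = k \<and> W \<inter> C = A} =
    (if card A \<le> k then (card X - card C) choose (k - card A) else 0)"
proof (cases "card A \<le> k")
  case True
  have fC: "finite C" using CX fX finite_subset by blast
  have fA: "finite A" using AC fC finite_subset by blast
  let ?Ys = "{Y. Y \<subseteq> X - C \<and> card Y = k - card A}"
  have "{W. W \<subseteq> X \<and> card W = k \<and> W \<inter> C = A} = (\<lambda>Y. Y \<union> A) ` ?Ys"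
  proof (intro equalityI subsetI)
    fix W assume "W \<in> {W. W \<subseteq> X \<and> card W = k \<and> W \<inter> C = A}"
    then have W: "W \<subseteq> X" "card W = k" "W \<inter> C = A" by auto
    have fW: "finite W" using W fX finite_subset by blast
    have "W - C = W - A" "A \<subseteq> W" using W by auto
    then have "card (W - C) = k - card A" using W fW by (simp add: card_Diff_subset fA)
    moreover have "W = (W - C) \<union> A" "W - C \<subseteq> X - C" using W by auto
    ultimately show "W \<in> (\<lambda>Y. Y \<union> A) ` ?Ys" by blast
  next
    fix W assume "W \<in> (\<lambda>Y. Y \<union> A) ` ?Ys"
    then obtain Y where Y: "Y \<subseteq> X - C" "card Y = k - card A" "W = Y \<union> A" by blast
    have "finite Y" using Y fX finite_subset by blast
    moreover have "Y \<inter> A = {}" using Y AC by blast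
    ultimately have "card W = card Y + card A" using Y fA by (simp add: card_Un_disjoint)
    then show "W \<in> {W. W \<subseteq> X \<and> card W = k \<and> W \<inter> C = A}" using Y AC CX True by auto
  qed
  moreover have "inj_on (\<lambda>Y. Y \<union> A) ?Ys"
    using AC by (auto simp: inj_on_def)
  moreover have "card ?Ys = (card X - card C) choose (k - card A)"
    using n_subsets[of "X - C" "k - card A"] fX CX fC by (simp add: card_Diff_subset)
  ultimately show ?thesis using True by (simp add: card_image)
next
  case False
  have "card A \<le> card W" if "W \<subseteq> X" "W \<inter> C = A" for W
    using that fX by (intro card_mono) (auto intro: finite_subset)
  then have "{W. W \<subseteq> X \<and> card W = k \<and> W \<inter> C = A} = {}" using False by fastforce
  then show ?thesis using False by (simp only: card.empty if_False)
qed

context circulant_join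
begin

lemma trace_eq_iff:
  assumes "r < l" "B \<subseteq> {..<m}"
  shows "trace W r = B \<longleftrightarrow> W \<inter> res_class r = vtx r ` B"
proof -
  have "inj (vtx r)" by (simp add: inj_def)
  moreover have "trace W r \<subseteq> {..<m}" by (auto simp: trace_def)
  ultimately show ?thesis
    using assms by (auto simp: Int_res_class inj_image_eq_iff)
qed

lemma sum_trace_in:
  assumes r: "r < l" and S: "finite S" "\<And>B. B \<in> S \<Longrightarrow> B \<subseteq> {..<m}"
  shows "(\<Sum>W | W \<subseteq> {0..<l * m} \<and> card W = k. of_bool (trace W r \<in> S) :: nat) =
    (\<Sum>B\<in>S. if card B \<le> k then (l * m - m) choose (k - card B) else 0)"
proof -
  let ?Ws = "{W. W \<subseteq> {0..<l * m} \<and> card W = k}"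
  let ?fiber = "\<lambda>B. {W. W \<subseteq> {0..<l * m} \<and> card W = k \<and> W \<inter> res_class r = vtx r ` B}"
  have fin: "finite ?Ws" by (rule finite_subset[of _ "Pow {0..<l * m}"]) auto
  have fiber_iff: "W \<in> ?fiber B \<longleftrightarrow> W \<in> ?Ws \<and> trace W r = B" if "B \<in> S" for W B
    using trace_eq_iff[OF r S(2)[OF that]] by simp
  have "{W \<in> ?Ws. trace W r \<in> S} = (\<Union>B\<in>S. ?fiber B)"
  proof (intro equalityI subsetI)
    fix W assume "W \<in> {W \<in> ?Ws. trace W r \<in> S}"
    then show "W \<in> (\<Union>B\<in>S. ?fiber B)" using fiber_iff[of "trace W r" W] by blast
  next
    fix W assume "W \<in> (\<Union>B\<in>S. ?fiber B)"
    then obtain B where "B \<in> S" "W \<in> ?fiber B" by blast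
    then show "W \<in> {W \<in> ?Ws. trace W r \<in> S}" using fiber_iff by simp
  qed
  then have "(\<Sum>W\<in>?Ws. of_bool (trace W r \<in> S) :: nat) = card (\<Union>B\<in>S. ?fiber B)"
    using fin by (simp add: Int_def)
  also have "\<dots> = (\<Sum>B\<in>S. card (?fiber B))"
  proof (rule card_UN_disjoint[OF S(1)])
    show "\<forall>B\<in>S. finite (?fiber B)"
      using fin by (auto intro: finite_subset[of _ ?Ws])
    show "\<forall>B\<in>S. \<forall>B'\<in>S. B \<noteq> B' \<longrightarrow> ?fiber B \<inter> ?fiber B' = {}"
    proof (intro ballI impI)
      fix B B' assume "B \<in> S" "B' \<in> S" "B \<noteq> B'"
      then show "?fiber B \<inter> ?fiber B' = {}" using fiber_iff[of B] fiber_iff[of B'] by auto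
    qed
  qed
  also have "\<dots> = (\<Sum>B\<in>S. if card B \<le> k then (l * m - m) choose (k - card B) else 0)"
  proof (rule sum.cong[OF refl])
    fix B assume "B \<in> S"
    then have "vtx r ` B \<subseteq> res_class r" using S(2) r by (auto simp: res_class_eq)
    moreover have "card (vtx r ` B) = card B" by (simp add: card_image inj_on_def)
    ultimately show "card (?fiber B) = (if card B \<le> k then (l * m - m) choose (k - card B) else 0)"
      using card_subsets_with_trace[OF res_class_subset[of r], where A = "vtx r ` B" and k = k]
        card_res_class[OF r] by simp
  qed
  finally show ?thesis .
qed

lemma sum_nonempty_trace:
  assumes r: "r < l"
  shows "(\<Sum>W | W \<subseteq> {0..<l * m} \<and> card W = k. of_bool (trace W r \<noteq> {}) :: nat) =
    (l * m choose k) - ((l * m - m) choose k)"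
proof -
  let ?Ws = "{W. W \<subseteq> {0..<l * m} \<and> card W = k}"
  have "(\<Sum>W\<in>?Ws. of_bool (trace W r \<noteq> {})) + (\<Sum>W\<in>?Ws. of_bool (trace W r \<in> {{}})) =
      (\<Sum>W\<in>?Ws. 1 :: nat)"
    unfolding sum.distrib[symmetric] by (rule sum.cong) auto
  moreover have "(\<Sum>W\<in>?Ws. 1 :: nat) = l * m choose k" using n_subsets[of "{0..<l * m}" k] by simp
  moreover have "(\<Sum>W\<in>?Ws. of_bool (trace W r \<in> {{}}) :: nat) = (l * m - m) choose k"
    using sum_trace_in[OF r, of "{{}}" k] by simp
  ultimately show ?thesis by simp
qed

lemma sum_split_trace:
  assumes r: "r < l" and i: "1 \<le> i"
  shows "(\<Sum>W | W \<subseteq> {0..<l * m} \<and> card W = Suc i. of_bool (trace W r \<in> cyc_split_sets m) :: nat) =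
    m * ((l * m - m + 1) choose (i - 1))"
proof -
  let ?N = "l * m - m"
  define h where "h c = (if c \<le> Suc i then ?N choose (Suc i - c) else 0)" for c
  have "finite (cyc_split_sets m)" by (simp add: cyc_split_sets_def)
  moreover have "B \<subseteq> {..<m}" if "B \<in> cyc_split_sets m" for B
    using that m_pos by (auto simp: cyc_split_sets_def cyc_succ_less cyc_pred_less)
  ultimately have "(\<Sum>W | W \<subseteq> {0..<l * m} \<and> card W = Suc i. of_bool (trace W r \<in> cyc_split_sets m)) =
      (\<Sum>B\<in>cyc_split_sets m. h (card B))"
    unfolding h_def by (rule sum_trace_in[OF r])
  also have "\<dots> = m * h 2 + m * h 3" by (rule sum_cyc_split_sets[OF m5])
  also have "\<dots> = m * (?N choose (i - 1)) + m * (if 2 \<le> i then ?N choose (i - 2) else 0)"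
    using i by (simp add: h_def numeral_eq_Suc)
  also have "\<dots> = m * ((?N + 1) choose (i - 1))"
  proof (cases "i = 1")
    case False
    then obtain j where "i = Suc (Suc j)" using i by (metis Suc_le_D le_SucE One_nat_def)
    then show ?thesis by (simp add: add_mult_distrib2[symmetric])
  qed simp
  finally show ?thesis .
qed

lemma sum_card_co_rep:
  assumes i: "1 \<le> i"
  shows "(\<Sum>W | W \<subseteq> {0..<l * m} \<and> card W = Suc i. card (co_rep W ` W)) =
    l * ((l * m choose Suc i) - ((l * m - m) choose Suc i) + m * ((l * m - m + 1) choose (i - 1)))"
proof -
  let ?Ws = "{W. W \<subseteq> {0..<l * m} \<and> card W = Suc i}"
  have "(\<Sum>W\<in>?Ws. card (co_rep W ` W)) =
      (\<Sum>W\<in>?Ws. \<Sum>r<l. of_bool (trace W r \<noteq> {}) + of_bool (trace W r \<in> cyc_split_sets m))"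
    by (rule sum.cong[OF refl]) (simp add: card_co_rep_sum_classes)
  also have "\<dots> = (\<Sum>r<l. \<Sum>W\<in>?Ws. of_bool (trace W r \<noteq> {}) + of_bool (trace W r \<in> cyc_split_sets m))"
    by (rule sum.swap)
  also have "\<dots> = (\<Sum>r<l. (l * m choose Suc i) - ((l * m - m) choose Suc i) +
      m * ((l * m - m + 1) choose (i - 1)))"
    by (rule sum.cong[OF refl])
      (simp only: lessThan_iff sum.distrib sum_nonempty_trace sum_split_trace[OF _ i])
  finally show ?thesis by simp
qed

end

theorem theorem4p3:
  fixes m l i :: nat
  assumes "m \<ge> 5" and "l \<ge> 2" and "i \<ge> 1"
  shows "int (betti TYPE('k::field) (l * m)
              (circulant_adj (l * m) {s \<in> {1 .. (l * m) div 2}. s = l \<or> \<not> l dvd s}) i (i + 1))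
         = int (l * m * ((l - 1) * m + 1 choose (i - 1))) + int ((l - 1) * (l * m choose (i + 1)))
           - int (l * ((l - 1) * m choose (i + 1)))"
proof -
  interpret circulant_join l m using assms(1,2) by unfold_locales
  define A B P where "A = l * m choose Suc i" and "B = (l - 1) * m choose Suc i"
    and "P = (l - 1) * m + 1 choose (i - 1)"
  have "l * m - m = (l - 1) * m" by (simp add: diff_mult_distrib)
  then have "int (betti TYPE('k) (l * m) G i (i + 1)) = int (l * (A - B + m * P)) - int A"
    using betti_linear_strand[OF assms(3), where 'k='k] sum_card_co_rep[OF assms(3)]
    by (simp add: A_def B_def P_def flip: of_nat_sum)
  moreover have "B \<le> A" unfolding A_def B_def by (rule binomial_right_mono) simp
  ultimately show ?thesis
    using assms(2) unfolding jumps_def[symmetric]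
    by (simp add: algebra_simps A_def B_def P_def)
qed

end
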